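(* Let $\kappa$ be a kernel on a type space $(\mathcal S,\mu)$. (i) If $\kappa$ is critical and $T_\kappa$ is a compact operator on $L^2(\mu)$, then $\chi(\kappa)=\infty$. In particular, this applies if $\int_{\mathcal S^2}\kappa(x,y)^2\,d\mu(x)\,d\mu(y)<\infty$. (ii) If $\kappa$ is supercritical, then $\chi(\kappa)=\infty$.
   Context: A type space is a measure space $(\mathcal S,\mu)$ with $0<\mu(\mathcal S)<\infty$; a kernel is a symmetric measurable $\kappa:\mathcal S^2\to[0,\infty)$ with $\int_{\mathcal S^2}\kappa<\infty$ and $\int\kappa(x,y)d\mu(y)<\infty$ for all $x$. $T_\kappa f(x)=\int\kappa(x,y)f(y)d\mu(y)$, $\|T_\kappa\|=\sup\{\|T_\kappa f\|_{L^2(\mu)}:f\ge0,\|f\|_{L^2(\mu)}\le1\}$; $\kappa$ is critical if $\|T_\kappa\|=1$ and supercritical if $\|T_\kappa\|>1$. The branching process $\mathfrak X_\kappa(x)$ starts with one particle of type $x$; each particle of type $y$ independently has children whose types form a Poisson process with intensity $\kappa(y,z)\,d\mu(z)$; $\chi(\kappa)=\mu(\mathcal S)^{-1}\int\mathbb E|\mathfrak X_\kappa(x)|\,d\mu(x)$. *)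

theory Defs
  imports "HOL-Analysis.Analysis"
begin

definition type_space :: "'a measure \<Rightarrow> bool" where
  "type_space M \<longleftrightarrow> 0 < emeasure M (space M) \<and> emeasure M (space M) < \<infinity>"

definition is_kernel :: "'a measure \<Rightarrow> ('a \<Rightarrow> 'a \<Rightarrow> real) \<Rightarrow> bool" where
  "is_kernel M \<kappa> \<longleftrightarrow>
     (\<lambda>z. \<kappa> (fst z) (snd z)) \<in> borel_measurable (M \<Otimes>\<^sub>M M) \<and>
     (\<forall>x\<in>space M. \<forall>y\<in>space M. 0 \<le> \<kappa> x y \<and> \<kappa> x y = \<kappa> y x) \<and>
     (\<integral>\<^sup>+ z. ennreal (\<kappa> (fst z) (snd z)) \<partial>(M \<Otimes>\<^sub>M M)) < \<infinity> \<and>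
     (\<forall>x\<in>space M. (\<integral>\<^sup>+ y. ennreal (\<kappa> x y) \<partial>M) < \<infinity>)"

definition enn_sqrt :: "ennreal \<Rightarrow> ennreal" where
  "enn_sqrt a = (if a = \<infinity> then \<infinity> else ennreal (sqrt (enn2real a)))"

definition L2norm_enn :: "'a measure \<Rightarrow> ('a \<Rightarrow> ennreal) \<Rightarrow> ennreal" where
  "L2norm_enn M g = enn_sqrt (\<integral>\<^sup>+ x. g x ^ 2 \<partial>M)"

definition T_nn :: "'a measure \<Rightarrow> ('a \<Rightarrow> 'a \<Rightarrow> real) \<Rightarrow> ('a \<Rightarrow> real) \<Rightarrow> 'a \<Rightarrow> ennreal" where
  "T_nn M \<kappa> f x = (\<integral>\<^sup>+ y. ennreal (\<kappa> x y) * ennreal (f y) \<partial>M)"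

definition T_norm :: "'a measure \<Rightarrow> ('a \<Rightarrow> 'a \<Rightarrow> real) \<Rightarrow> ennreal" where
  "T_norm M \<kappa> = (SUP f \<in> {f. f \<in> borel_measurable M \<and> (\<forall>x\<in>space M. 0 \<le> f x) \<and>
                           (\<integral>\<^sup>+ x. ennreal ((f x)\<^sup>2) \<partial>M) \<le> 1}.
                   L2norm_enn M (T_nn M \<kappa> f))"

definition critical :: "'a measure \<Rightarrow> ('a \<Rightarrow> 'a \<Rightarrow> real) \<Rightarrow> bool" where
  "critical M \<kappa> \<longleftrightarrow> T_norm M \<kappa> = 1"

definition supercritical :: "'a measure \<Rightarrow> ('a \<Rightarrow> 'a \<Rightarrow> real) \<Rightarrow> bool" where
  "supercritical M \<kappa> \<longleftrightarrow> T_norm M \<kappa> > 1"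

definition in_L2 :: "'a measure \<Rightarrow> ('a \<Rightarrow> real) \<Rightarrow> bool" where
  "in_L2 M f \<longleftrightarrow> f \<in> borel_measurable M \<and> (\<integral>\<^sup>+ x. ennreal ((f x)\<^sup>2) \<partial>M) < \<infinity>"

definition T_op :: "'a measure \<Rightarrow> ('a \<Rightarrow> 'a \<Rightarrow> real) \<Rightarrow> ('a \<Rightarrow> real) \<Rightarrow> 'a \<Rightarrow> real" where
  "T_op M \<kappa> f x = (\<integral> y. \<kappa> x y * f y \<partial>M)"

text \<open>T_kappa is a compact operator on L2(mu): it is well defined on L2 (the defining
  integral exists a.e. and the result lies in L2), and the image of the closed unit
  ball is relatively compact, i.e. every sequence in the unit ball has a subsequence
  whose images form a Cauchy sequence in L2 (L2 is complete).\<close>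
definition T_compact :: "'a measure \<Rightarrow> ('a \<Rightarrow> 'a \<Rightarrow> real) \<Rightarrow> bool" where
  "T_compact M \<kappa> \<longleftrightarrow>
     (\<forall>f. in_L2 M f \<longrightarrow>
        (AE x in M. integrable M (\<lambda>y. \<kappa> x y * f y)) \<and> in_L2 M (T_op M \<kappa> f)) \<and>
     (\<forall>F :: nat \<Rightarrow> 'a \<Rightarrow> real.
        (\<forall>n. in_L2 M (F n) \<and> (\<integral>\<^sup>+ x. ennreal ((F n x)\<^sup>2) \<partial>M) \<le> 1) \<longrightarrow>
        (\<exists>r :: nat \<Rightarrow> nat. strict_mono r \<and>
           (\<forall>e>0. \<exists>N::nat. \<forall>m\<ge>N. \<forall>n\<ge>N.
              (\<integral>\<^sup>+ x. ennreal ((T_op M \<kappa> (F (r m)) x - T_op M \<kappa> (F (r n)) x)\<^sup>2) \<partial>M)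
                < ennreal e)))"

text \<open>Expected number of particles in generation n of the branching process
  X_kappa(x): gen_mean 0 x = 1 and gen_mean (n+1) x = int kappa(x,y) gen_mean n y dmu(y)
  (each particle of type y has Poisson(kappa(y,z) dmu(z)) children).\<close>
fun gen_mean :: "'a measure \<Rightarrow> ('a \<Rightarrow> 'a \<Rightarrow> real) \<Rightarrow> nat \<Rightarrow> 'a \<Rightarrow> ennreal" where
  "gen_mean M \<kappa> 0 x = 1"
| "gen_mean M \<kappa> (Suc n) x = (\<integral>\<^sup>+ y. ennreal (\<kappa> x y) * gen_mean M \<kappa> n y \<partial>M)"

definition expected_size :: "'a measure \<Rightarrow> ('a \<Rightarrow> 'a \<Rightarrow> real) \<Rightarrow> 'a \<Rightarrow> ennreal" where
  "expected_size M \<kappa> x = (\<Sum>n. gen_mean M \<kappa> n x)"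

definition chi :: "'a measure \<Rightarrow> ('a \<Rightarrow> 'a \<Rightarrow> real) \<Rightarrow> ennreal" where
  "chi M \<kappa> = (\<integral>\<^sup>+ x. expected_size M \<kappa> x \<partial>M) / emeasure M (space M)"

end

theory Submission
  imports Defs "HOL-Library.Diagonal_Subsequence"
begin

text \<open>Self-adjointness of $T$ turns $\|T^n 1\|^2$ into $\int T^{2n} 1$, the mean size of
  generation $2n$, so $\chi = \infty$ as soon as $\|T^n 1\|$ stays bounded below. For bounded
  $g \ge 0$ we have $T^n g \le \|g\|_\infty T^n 1$, and by Cauchy--Schwarz and self-adjointness
  $n \mapsto \|T^n g\|^2$ is log-convex, so $\|T^n g\|$ never drops below $\|g\|$ once
  $\|T g\| \ge \|g\|$. In the supercritical case such a $g$ comes from truncating a nonnegative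
  $f$ with $\|T f\| > \|f\|$. In the critical case take unit vectors $f_j \ge 0$ with
  $\|T f_j\| \to 1$: log-convexity gives $\|T^{n+1} f_j\|^2 \ge 1/2$ for large $j$, and an
  $L^2$-Cauchy subsequence of $T f_j$, provided by compactness, can be cut at a common level $L$
  leaving a uniformly small remainder that the contraction $T^n$ cannot enlarge. Finally, a
  square-integrable kernel is an $L^2$ limit of step kernels, whose operators have finite rank.\<close>

lemma ennreal_eq_top_if_multiples_le:
  fixes c X :: ennreal
  assumes le: "\<And>N::nat. of_nat N * c \<le> X" and "c \<noteq> 0"
  shows "X = \<infinity>"
proof (rule ccontr)
  assume "X \<noteq> \<infinity>"
  then obtain r where r: "X = ennreal r" "0 \<le> r" by (cases X) auto
  have "c \<le> X" using le[of 1] by simp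
  then obtain c' where c': "c = ennreal c'" "0 \<le> c'" using r by (cases c) (auto simp: top_unique)
  with \<open>c \<noteq> 0\<close> have "0 < c'" by auto
  obtain N :: nat where N: "r / c' < N" using reals_Archimedean2 by blast
  have "ennreal (N * c') \<le> ennreal r"
    using le[of N] r c' by (simp add: ennreal_mult ennreal_of_nat_eq_real_of_nat)
  then have "N * c' \<le> r" using r by (simp add: ennreal_le_iff)
  with N \<open>0 < c'\<close> show False by (simp add: field_simps)
qed

lemma log_convex_seq_ge_geometric:
  fixes Q :: "nat \<Rightarrow> real"
  assumes log_convex: "\<And>n. (Q (Suc n))\<^sup>2 \<le> Q (Suc (Suc n)) * Q n"
    and "0 < Q 0" and "0 < r" and "r * Q 0 \<le> Q 1"
  shows "r ^ n * Q 0 \<le> Q n"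
proof -
  have ratio: "r * Q n \<le> Q (Suc n) \<and> 0 < Q n" for n
  proof (induction n)
    case 0 then show ?case using assms by simp
  next
    case (Suc n)
    then have a: "r * Q n \<le> Q (Suc n)" and b: "0 < Q n" by auto
    have p: "0 < Q (Suc n)" using a b \<open>0 < r\<close> by (smt (verit) mult_pos_pos)
    have "r * Q (Suc n) * Q n \<le> Q (Suc n) * Q (Suc n)"
      using a p by (simp add: mult.commute mult.left_commute mult_left_mono)
    also have "\<dots> \<le> Q (Suc (Suc n)) * Q n" using log_convex[of n] by (simp add: power2_eq_square)
    finally have "r * Q (Suc n) \<le> Q (Suc (Suc n))" using b by simp
    then show ?case using p by simp
  qed
  show ?thesis
  proof (induction n)
    case (Suc n)
    have "r ^ Suc n * Q 0 = r * (r ^ n * Q 0)" by simp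
    also have "\<dots> \<le> r * Q n" using Suc \<open>0 < r\<close> by simp
    also have "\<dots> \<le> Q (Suc n)" using ratio by blast
    finally show ?case .
  qed simp
qed

lemma half_le_power_one_minus_inverse:
  fixes x :: real
  assumes "2 * real m \<le> x"
  shows "1 / 2 \<le> (1 - 1 / x) ^ m"
proof (cases "m = 0")
  case False
  then have "2 \<le> x" using assms by simp
  have "1 / 2 \<le> 1 + real m * (- 1 / x)"
    using assms \<open>2 \<le> x\<close> by (simp add: field_simps)
  also have "\<dots> \<le> (1 + - 1 / x) ^ m"
    using \<open>2 \<le> x\<close> by (intro Bernoulli_inequality) (simp add: field_simps)
  finally show ?thesis by simp
qed simp

lemma power2_max_0_diff_le:
  fixes a b L :: real
  shows "(max 0 (a - L))\<^sup>2 \<le> 2 * (max 0 (b - L))\<^sup>2 + 2 * (a - b)\<^sup>2"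
proof -
  have "max 0 (a - L) \<le> max 0 (b - L) + \<bar>a - b\<bar>" by auto
  then have "(max 0 (a - L))\<^sup>2 \<le> (max 0 (b - L) + \<bar>a - b\<bar>)\<^sup>2" by (intro power_mono) auto
  also have "\<dots> \<le> 2 * (max 0 (b - L))\<^sup>2 + 2 * (a - b)\<^sup>2"
    by (smt (verit) power2_abs power2_diff power2_sum zero_le_power2)
  finally show ?thesis .
qed

lemma SUP_power2_incseq_ennreal:
  fixes a :: "nat \<Rightarrow> ennreal"
  assumes "incseq a"
  shows "(SUP L. a L)\<^sup>2 = (SUP L. (a L)\<^sup>2)"
proof (rule antisym)
  have "(SUP L. a L)\<^sup>2 = (SUP i. SUP j. a j * a i)"
    by (simp add: power2_eq_square SUP_mult_left_ennreal SUP_mult_right_ennreal)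
  also have "\<dots> \<le> (SUP L. (a L)\<^sup>2)"
  proof (intro SUP_least)
    fix i j
    have "a j * a i \<le> a (max i j) * a (max i j)"
      using assms by (intro mult_mono) (auto simp: incseq_def)
    also have "\<dots> \<le> (SUP L. (a L)\<^sup>2)"
      by (intro SUP_upper2[of "max i j"]) (auto simp: power2_eq_square)
    finally show "a j * a i \<le> (SUP L. (a L)\<^sup>2)" .
  qed
  finally show "(SUP L. a L)\<^sup>2 \<le> (SUP L. (a L)\<^sup>2)" .
qed (intro SUP_least power_mono SUP_upper; simp)

lemma SUP_ennreal_min_of_nat: "(SUP L::nat. ennreal (min a (real L))) = ennreal a"
proof (rule antisym)
  show "(SUP L::nat. ennreal (min a (real L))) \<le> ennreal a"
    by (intro SUP_least ennreal_leI) auto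
  obtain L :: nat where "a \<le> real L" using real_nat_ceiling_ge by blast
  then show "ennreal a \<le> (SUP L::nat. ennreal (min a (real L)))"
    by (intro SUP_upper2[of L]) auto
qed

lemma ennreal_power2_add_le: "((a::ennreal) + b)\<^sup>2 \<le> 2 * a\<^sup>2 + 2 * b\<^sup>2"
proof -
  have "(a + b)\<^sup>2 = a\<^sup>2 + b\<^sup>2 + 2 * a * b" by (rule power2_sum)
  also have "\<dots> \<le> a\<^sup>2 + b\<^sup>2 + (a\<^sup>2 + b\<^sup>2)" by (intro add_left_mono sum_of_squares_ge_ennreal)
  finally show ?thesis by (simp add: algebra_simps mult_2)
qed

lemma ennreal_min_add_diff: "(a::ennreal) = min a c + (a - c)"
proof (cases "a \<le> c")
  case True
  show ?thesis
  proof (cases "a = \<infinity>")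
    case False
    then have "a - c = 0" using True by (simp add: diff_eq_0_iff_ennreal less_top)
    then show ?thesis using True by simp
  qed (simp add: top_unique True)
next
  case False then show ?thesis by (simp add: add_diff_inverse_ennreal)
qed

lemma ennreal_two_mult_add_less:
  assumes "a \<le> ennreal (e/8)" "b \<le> ennreal (e/8)" "0 < e"
  shows "2 * a + 2 * b < ennreal e"
proof -
  have "2 * a + 2 * b \<le> 2 * ennreal (e/8) + 2 * ennreal (e/8)"
    using assms by (intro add_mono mult_left_mono) auto
  also have "\<dots> = ennreal (e/2)"
  proof -
    have "2 * ennreal (e/8) = ennreal (e/4)" using ennreal_mult[of 2 "e/8"] assms by simp
    moreover have "ennreal (e/4) + ennreal (e/4) = ennreal (e/2)"
      using ennreal_plus[of "e/4" "e/4"] assms by simp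
    ultimately show ?thesis by simp
  qed
  also have "\<dots> < ennreal e" using assms by (simp add: ennreal_less_iff)
  finally show ?thesis .
qed

lemma ennreal_eighth_le:
  fixes Y :: ennreal
  assumes "ennreal (1/2) \<le> 2 * Y + 2 * ennreal (1/8)"
  shows "ennreal (1/8) \<le> Y"
proof (cases Y)
  case (real y)
  have "2 * ennreal y = ennreal (2 * y)" using ennreal_mult[of 2 y] real by simp
  moreover have "2 * ennreal (1/8) = ennreal (1/4)" using ennreal_mult[of 2 "1/8"] by simp
  moreover have "ennreal (2 * y) + ennreal (1/4) = ennreal (2 * y + 1/4)"
    using ennreal_plus[of "2 * y" "1/4"] real by simp
  ultimately have "ennreal (1/2) \<le> ennreal (2 * y + 1/4)" using assms real by (simp only:)
  then have "1/2 \<le> 2 * y + 1/4" using real by (subst (asm) ennreal_le_iff) auto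
  then have "1/8 \<le> y" by linarith
  then show ?thesis using real by (simp add: ennreal_leI)
qed simp

lemma enn_sqrt_le_1_imp: "enn_sqrt a \<le> 1 \<Longrightarrow> a \<le> 1"
  unfolding enn_sqrt_def by (cases a) (auto split: if_splits simp: ennreal_le_iff)

lemma enn_sqrt_gt_1_imp: "1 < enn_sqrt a \<Longrightarrow> 1 < a"
  unfolding enn_sqrt_def by (cases a) (auto split: if_splits simp: ennreal_less_iff)

lemma enn_sqrt_gt_imp: "ennreal b < enn_sqrt a \<Longrightarrow> 0 \<le> b \<Longrightarrow> ennreal (b\<^sup>2) < a"
  unfolding enn_sqrt_def
  by (cases a) (auto split: if_splits simp: ennreal_less_iff dest: power_strict_mono[of b _ 2])

section \<open>Cauchy sequences in $L^2$\<close>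

definition L2_Cauchy :: "'a measure \<Rightarrow> (nat \<Rightarrow> 'a \<Rightarrow> real) \<Rightarrow> bool" where
  "L2_Cauchy M G \<longleftrightarrow>
     (\<forall>e>0. \<exists>N::nat. \<forall>m\<ge>N. \<forall>n\<ge>N. (\<integral>\<^sup>+ x. ennreal ((G m x - G n x)\<^sup>2) \<partial>M) < ennreal e)"

lemma L2_Cauchy_subseq:
  assumes "L2_Cauchy M G" "strict_mono s"
  shows "L2_Cauchy M (\<lambda>n. G (s n))"
  unfolding L2_Cauchy_def
proof (intro allI impI)
  fix e :: real assume "0 < e"
  then obtain N where "\<forall>m\<ge>N. \<forall>n\<ge>N. (\<integral>\<^sup>+ x. ennreal ((G m x - G n x)\<^sup>2) \<partial>M) < ennreal e"
    using assms(1) unfolding L2_Cauchy_def by blast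
  then show "\<exists>N. \<forall>m\<ge>N. \<forall>n\<ge>N. (\<integral>\<^sup>+ x. ennreal ((G (s m) x - G (s n) x)\<^sup>2) \<partial>M) < ennreal e"
    using seq_suble[OF assms(2)] by (meson order_trans)
qed

lemma nn_integral_power2_mono:
  "(\<And>x. x \<in> space M \<Longrightarrow> 0 \<le> f x) \<Longrightarrow> (\<And>x. x \<in> space M \<Longrightarrow> f x \<le> g x) \<Longrightarrow>
    (\<integral>\<^sup>+x. ennreal ((f x)\<^sup>2) \<partial>M) \<le> (\<integral>\<^sup>+x. ennreal ((g x)\<^sup>2) \<partial>M)"
  by (intro nn_integral_mono ennreal_leI power_mono) auto

lemma nn_integral_power2_add_le:
  assumes [measurable]: "f \<in> borel_measurable M" "g \<in> borel_measurable M"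
  shows "(\<integral>\<^sup>+x. ennreal ((f x + g x)\<^sup>2) \<partial>M)
    \<le> 2 * (\<integral>\<^sup>+x. ennreal ((f x)\<^sup>2) \<partial>M) + 2 * (\<integral>\<^sup>+x. ennreal ((g x)\<^sup>2) \<partial>M)"
proof -
  have "(\<integral>\<^sup>+x. ennreal ((f x + g x)\<^sup>2) \<partial>M)
      \<le> (\<integral>\<^sup>+x. 2 * ennreal ((f x)\<^sup>2) + 2 * ennreal ((g x)\<^sup>2) \<partial>M)"
  proof (intro nn_integral_mono)
    fix x
    have "(f x + g x)\<^sup>2 \<le> 2 * (f x)\<^sup>2 + 2 * (g x)\<^sup>2"
      by (smt (verit) power2_diff power2_sum zero_le_power2)
    then have "ennreal ((f x + g x)\<^sup>2) \<le> ennreal (2 * (f x)\<^sup>2 + 2 * (g x)\<^sup>2)"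
      by (rule ennreal_leI)
    then show "ennreal ((f x + g x)\<^sup>2) \<le> 2 * ennreal ((f x)\<^sup>2) + 2 * ennreal ((g x)\<^sup>2)"
      by (simp add: ennreal_plus ennreal_mult)
  qed
  also have "\<dots> = 2 * (\<integral>\<^sup>+x. ennreal ((f x)\<^sup>2) \<partial>M) + 2 * (\<integral>\<^sup>+x. ennreal ((g x)\<^sup>2) \<partial>M)"
    by (simp add: nn_integral_add nn_integral_cmult)
  finally show ?thesis .
qed

lemma nn_integral_power2_diff_le:
  assumes [measurable]: "f \<in> borel_measurable M" "g \<in> borel_measurable M" "h \<in> borel_measurable M"
  shows "(\<integral>\<^sup>+x. ennreal ((f x - h x)\<^sup>2) \<partial>M)
    \<le> 2 * (\<integral>\<^sup>+x. ennreal ((f x - g x)\<^sup>2) \<partial>M) + 2 * (\<integral>\<^sup>+x. ennreal ((g x - h x)\<^sup>2) \<partial>M)"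
  using nn_integral_power2_add_le[of "\<lambda>x. f x - g x" M "\<lambda>x. g x - h x"] by simp

lemma L2_Cauchy_add:
  assumes [measurable]: "\<And>n. G n \<in> borel_measurable M" "\<And>n. H n \<in> borel_measurable M"
    and "L2_Cauchy M G" "L2_Cauchy M H"
  shows "L2_Cauchy M (\<lambda>n x. G n x + H n x)"
  unfolding L2_Cauchy_def
proof (intro allI impI)
  fix e :: real assume e: "0 < e"
  then have "0 < e / 8" by simp
  then obtain N1 N2 where
      N1: "\<forall>m\<ge>N1. \<forall>n\<ge>N1. (\<integral>\<^sup>+ x. ennreal ((G m x - G n x)\<^sup>2) \<partial>M) < ennreal (e/8)" and
      N2: "\<forall>m\<ge>N2. \<forall>n\<ge>N2. (\<integral>\<^sup>+ x. ennreal ((H m x - H n x)\<^sup>2) \<partial>M) < ennreal (e/8)"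
    using assms(3,4) unfolding L2_Cauchy_def by meson
  have "(\<integral>\<^sup>+ x. ennreal ((G m x + H m x - (G n x + H n x))\<^sup>2) \<partial>M) < ennreal e"
    if "m \<ge> max N1 N2" "n \<ge> max N1 N2" for m n
  proof -
    have "(\<integral>\<^sup>+ x. ennreal ((G m x + H m x - (G n x + H n x))\<^sup>2) \<partial>M)
        = (\<integral>\<^sup>+ x. ennreal (((G m x - G n x) + (H m x - H n x))\<^sup>2) \<partial>M)"
      by (simp add: algebra_simps)
    also have "\<dots> \<le> 2 * (\<integral>\<^sup>+ x. ennreal ((G m x - G n x)\<^sup>2) \<partial>M)
        + 2 * (\<integral>\<^sup>+ x. ennreal ((H m x - H n x)\<^sup>2) \<partial>M)"
      by (rule nn_integral_power2_add_le) measurable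
    also have "\<dots> < ennreal e"
      using N1 N2 that e by (intro ennreal_two_mult_add_less) (auto intro: less_imp_le)
    finally show ?thesis .
  qed
  then show "\<exists>N. \<forall>m\<ge>N. \<forall>n\<ge>N.
      (\<integral>\<^sup>+ x. ennreal ((G m x + H m x - (G n x + H n x))\<^sup>2) \<partial>M) < ennreal e"
    by blast
qed

lemma L2_Cauchy_scaled:
  assumes "Cauchy a" and [measurable]: "g \<in> borel_measurable M"
    and g: "(\<integral>\<^sup>+x. ennreal ((g x)\<^sup>2) \<partial>M) < \<infinity>"
  shows "L2_Cauchy M (\<lambda>n x. a n * g x)"
  unfolding L2_Cauchy_def
proof (intro allI impI)
  fix e :: real assume e: "0 < e"
  obtain C where C: "(\<integral>\<^sup>+x. ennreal ((g x)\<^sup>2) \<partial>M) = ennreal C" "0 \<le> C"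
    using g by (cases "\<integral>\<^sup>+x. ennreal ((g x)\<^sup>2) \<partial>M") auto
  have "0 < sqrt (e / (C + 1))" using e C by simp
  then obtain N where N: "\<forall>m\<ge>N. \<forall>n\<ge>N. dist (a m) (a n) < sqrt (e / (C + 1))"
    using \<open>Cauchy a\<close> unfolding Cauchy_def by blast
  have "(\<integral>\<^sup>+x. ennreal ((a m * g x - a n * g x)\<^sup>2) \<partial>M) < ennreal e" if "m \<ge> N" "n \<ge> N" for m n
  proof -
    have "\<bar>a m - a n\<bar> < sqrt (e / (C + 1))" using N that by (simp add: dist_real_def)
    then have "\<bar>a m - a n\<bar>\<^sup>2 < (sqrt (e / (C + 1)))\<^sup>2" by (intro power_strict_mono) auto
    then have "(a m - a n)\<^sup>2 < e / (C + 1)" using e C by simp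
    then have "(a m - a n)\<^sup>2 * (C + 1) < e" using C by (simp add: pos_less_divide_eq)
    moreover have "(a m - a n)\<^sup>2 * C \<le> (a m - a n)\<^sup>2 * (C + 1)" by (simp add: mult_left_mono)
    ultimately have lt: "(a m - a n)\<^sup>2 * C < e" by linarith
    have "(\<integral>\<^sup>+x. ennreal ((a m * g x - a n * g x)\<^sup>2) \<partial>M)
        = (\<integral>\<^sup>+x. ennreal ((a m - a n)\<^sup>2) * ennreal ((g x)\<^sup>2) \<partial>M)"
      by (simp add: ennreal_mult' power_mult_distrib flip: left_diff_distrib)
    also have "\<dots> = ennreal ((a m - a n)\<^sup>2 * C)"
      using C by (simp add: nn_integral_cmult ennreal_mult)
    also have "\<dots> < ennreal e" using lt C by (simp add: ennreal_less_iff)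
    finally show ?thesis .
  qed
  then show "\<exists>N. \<forall>m\<ge>N. \<forall>n\<ge>N. (\<integral>\<^sup>+x. ennreal ((a m * g x - a n * g x)\<^sup>2) \<partial>M) < ennreal e"
    by blast
qed

lemma nn_integral_decseq_eventually_less:
  fixes h :: "nat \<Rightarrow> 'a \<Rightarrow> ennreal"
  assumes [measurable]: "\<And>i. h i \<in> borel_measurable M"
    and dec: "\<And>i x. x \<in> space M \<Longrightarrow> h (Suc i) x \<le> h i x"
    and fin: "(\<integral>\<^sup>+x. h 0 x \<partial>M) < \<infinity>"
    and lim: "\<And>x. x \<in> space M \<Longrightarrow> (INF i. h i x) = 0" and "0 < e"
  shows "\<exists>i. (\<integral>\<^sup>+x. h i x \<partial>M) < e"
proof -
  have "(INF i. integral\<^sup>N M (h i)) = (\<integral>\<^sup>+x. (INF i. h i x) \<partial>M)"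
    using dec fin by (intro nn_integral_monotone_convergence_INF_AE'[symmetric]) auto
  also have "\<dots> = 0" using lim by (simp cong: nn_integral_cong)
  finally have "(INF i. integral\<^sup>N M (h i)) < e" using \<open>0 < e\<close> by simp
  then show ?thesis by (simp add: INF_less_iff)
qed

lemma in_L2_truncation_small:
  assumes "in_L2 M G" and "0 < e"
  shows "\<exists>L::nat. (\<integral>\<^sup>+x. ennreal ((max 0 (G x - real L))\<^sup>2) \<partial>M) < e"
proof (rule nn_integral_decseq_eventually_less)
  have [measurable]: "G \<in> borel_measurable M" using assms unfolding in_L2_def by simp
  show "(\<lambda>x. ennreal ((max 0 (G x - real L))\<^sup>2)) \<in> borel_measurable M" for L :: nat
    by measurable
  have "(\<integral>\<^sup>+ x. ennreal ((max 0 (G x - real 0))\<^sup>2) \<partial>M) \<le> (\<integral>\<^sup>+ x. ennreal ((G x)\<^sup>2) \<partial>M)"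
    by (intro nn_integral_mono ennreal_leI) (auto simp: max_def power2_eq_square)
  also have "\<dots> < \<infinity>" using assms unfolding in_L2_def by simp
  finally show "(\<integral>\<^sup>+ x. ennreal ((max 0 (G x - real 0))\<^sup>2) \<partial>M) < \<infinity>" .
  show "(INF L::nat. ennreal ((max 0 (G x - real L))\<^sup>2)) = 0" for x
  proof -
    obtain L :: nat where "G x \<le> real L" using real_nat_ceiling_ge by blast
    then show ?thesis by (intro antisym INF_lower2[of L]) auto
  qed
qed (auto intro!: ennreal_leI power_mono \<open>0 < e\<close>)

lemma L2_Cauchy_uniform_truncation:
  assumes "L2_Cauchy M G" "\<And>n. in_L2 M (G n)" "0 < e"
  shows "\<exists>N (L::nat). \<forall>m\<ge>N. (\<integral>\<^sup>+x. ennreal ((max 0 (G m x - real L))\<^sup>2) \<partial>M) < ennreal e"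
proof -
  have [measurable]: "G n \<in> borel_measurable M" for n using assms(2) unfolding in_L2_def by simp
  have "0 < e / 8" using \<open>0 < e\<close> by simp
  then obtain N where N: "\<And>m. m \<ge> N \<Longrightarrow> (\<integral>\<^sup>+ x. ennreal ((G m x - G N x)\<^sup>2) \<partial>M) < ennreal (e/8)"
    using assms(1) unfolding L2_Cauchy_def by blast
  obtain L :: nat where L: "(\<integral>\<^sup>+x. ennreal ((max 0 (G N x - real L))\<^sup>2) \<partial>M) < ennreal (e/8)"
    using in_L2_truncation_small[OF assms(2)] \<open>0 < e / 8\<close> by fastforce
  have "(\<integral>\<^sup>+x. ennreal ((max 0 (G m x - real L))\<^sup>2) \<partial>M) < ennreal e" if "m \<ge> N" for m
  proof -
    have "(\<integral>\<^sup>+x. ennreal ((max 0 (G m x - real L))\<^sup>2) \<partial>M)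
        \<le> (\<integral>\<^sup>+x. 2 * ennreal ((max 0 (G N x - real L))\<^sup>2) + 2 * ennreal ((G m x - G N x)\<^sup>2) \<partial>M)"
    proof (intro nn_integral_mono)
      fix x
      have "ennreal ((max 0 (G m x - real L))\<^sup>2)
          \<le> ennreal (2 * (max 0 (G N x - real L))\<^sup>2 + 2 * (G m x - G N x)\<^sup>2)"
        by (intro ennreal_leI power2_max_0_diff_le)
      then show "ennreal ((max 0 (G m x - real L))\<^sup>2)
          \<le> 2 * ennreal ((max 0 (G N x - real L))\<^sup>2) + 2 * ennreal ((G m x - G N x)\<^sup>2)"
        by (simp add: ennreal_plus ennreal_mult)
    qed
    also have "\<dots> = 2 * (\<integral>\<^sup>+x. ennreal ((max 0 (G N x - real L))\<^sup>2) \<partial>M)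
        + 2 * (\<integral>\<^sup>+x. ennreal ((G m x - G N x)\<^sup>2) \<partial>M)"
      by (simp add: nn_integral_add nn_integral_cmult)
    also have "\<dots> < ennreal e"
      using L N[OF that] \<open>0 < e\<close> by (intro ennreal_two_mult_add_less) auto
    finally show ?thesis .
  qed
  then show ?thesis by blast
qed

text \<open>A diagonal argument over the approximation index $j$.\<close>

lemma L2_Cauchy_subseq_if_approx:
  fixes G :: "nat \<Rightarrow> 'a \<Rightarrow> real" and H :: "nat \<Rightarrow> nat \<Rightarrow> 'a \<Rightarrow> real"
  assumes [measurable]: "\<And>n. G n \<in> borel_measurable M" "\<And>j n. H j n \<in> borel_measurable M"
    and approx: "\<And>j n. (\<integral>\<^sup>+x. ennreal ((G n x - H j n x)\<^sup>2) \<partial>M) \<le> ennreal (1 / Suc j)"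
    and sub: "\<And>j (s :: nat \<Rightarrow> nat). strict_mono s \<Longrightarrow> \<exists>r. strict_mono r \<and> L2_Cauchy M (\<lambda>n. H j (s (r n)))"
  shows "\<exists>r. strict_mono r \<and> L2_Cauchy M (\<lambda>n. G (r n))"
proof -
  interpret S: subseqs "\<lambda>j s. L2_Cauchy M (\<lambda>n. H j (s n))"
  proof
    fix j and s :: "nat \<Rightarrow> nat" assume "strict_mono s"
    then show "\<exists>r. strict_mono r \<and> L2_Cauchy M (\<lambda>n. H j ((s \<circ> r) n))"
      using sub[OF \<open>strict_mono s\<close>] by (simp add: o_def)
  qed
  have diag: "L2_Cauchy M (\<lambda>n. H j (S.diagseq (Suc j + n)))" for j
    using S.diagseq_holds[of j] L2_Cauchy_subseq by (fastforce simp: o_def)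
  have "\<forall>e>0. \<exists>N::nat. \<forall>m\<ge>N. \<forall>n\<ge>N.
      (\<integral>\<^sup>+x. ennreal ((G (S.diagseq m) x - G (S.diagseq n) x)\<^sup>2) \<partial>M) < ennreal e"
  proof (intro allI impI)
    fix e :: real assume e: "0 < e"
    let ?d = "\<lambda>u v. \<integral>\<^sup>+x. ennreal ((u x - v x)\<^sup>2) \<partial>M"
    obtain j where j: "inverse (real (Suc j)) < e / 64"
      using reals_Archimedean[of "e/64"] e by auto
    then have "ennreal (1 / Suc j) \<le> ennreal (e / 64)"
      by (intro ennreal_leI) (simp add: inverse_eq_divide)
    then have close: "?d (G n) (H j n) \<le> ennreal (e / 64)" "?d (H j n) (G n) \<le> ennreal (e / 64)" for n
      using approx[of n j] by (auto simp: power2_commute)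
    obtain N where N: "\<forall>m\<ge>N. \<forall>n\<ge>N. ?d (H j (S.diagseq (Suc j + m))) (H j (S.diagseq (Suc j + n)))
        < ennreal (e/64)"
      using diag[of j] e unfolding L2_Cauchy_def by (meson divide_pos_pos zero_less_numeral)
    have "?d (G (S.diagseq m)) (G (S.diagseq n)) < ennreal e"
      if "m \<ge> Suc j + N" "n \<ge> Suc j + N" for m n
    proof -
      let ?m = "S.diagseq m" and ?n = "S.diagseq n"
      have mid: "?d (H j ?m) (H j ?n) \<le> ennreal (e/64)"
        using N[rule_format, of "m - Suc j" "n - Suc j"] that by (auto intro: less_imp_le)
      have "?d (G ?m) (G ?n) \<le> 2 * ?d (G ?m) (H j ?m) + 2 * ?d (H j ?m) (G ?n)"
        by (rule nn_integral_power2_diff_le) measurable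
      also have "\<dots> \<le> 2 * ?d (G ?m) (H j ?m) + 2 * (2 * ?d (H j ?m) (H j ?n) + 2 * ?d (H j ?n) (G ?n))"
        by (intro add_left_mono mult_left_mono nn_integral_power2_diff_le) auto
      also have "\<dots> < ennreal e"
      proof (rule ennreal_two_mult_add_less)
        show "2 * ?d (H j ?m) (H j ?n) + 2 * ?d (H j ?n) (G ?n) \<le> ennreal (e / 8)"
          using ennreal_two_mult_add_less[of _ "e / 8"] mid close e by (simp add: less_imp_le)
        show "?d (G ?m) (H j ?m) \<le> ennreal (e / 8)"
          using close(1) by (rule order_trans) (use e in simp)
      qed (use e in simp)
      finally show ?thesis .
    qed
    then show "\<exists>N. \<forall>m\<ge>N. \<forall>n\<ge>N.
        (\<integral>\<^sup>+x. ennreal ((G (S.diagseq m) x - G (S.diagseq n) x)\<^sup>2) \<partial>M) < ennreal e"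
      by blast
  qed
  then show ?thesis using S.subseq_diagseq unfolding L2_Cauchy_def by blast
qed

section \<open>Iterates of the kernel operator\<close>

locale type_space_kernel =
  fixes M :: "'a measure" and k :: "'a \<Rightarrow> 'a \<Rightarrow> real"
  assumes type_space: "type_space M" and kernel: "is_kernel M k"
begin

sublocale finite_measure M
  using type_space unfolding type_space_def by (intro finite_measureI) auto

sublocale P: pair_sigma_finite M M
  by (simp add: pair_sigma_finite_def sigma_finite_measure_axioms)

lemma kernel_measurable [measurable]: "(\<lambda>z. k (fst z) (snd z)) \<in> borel_measurable (M \<Otimes>\<^sub>M M)"
  using kernel unfolding is_kernel_def by simp

lemma kernel_section_measurable [measurable]: "x \<in> space M \<Longrightarrow> k x \<in> borel_measurable M"
  using measurable_Pair2[OF kernel_measurable, of x] by simp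

lemma kernel_nonneg: "x \<in> space M \<Longrightarrow> y \<in> space M \<Longrightarrow> 0 \<le> k x y"
  using kernel unfolding is_kernel_def by auto

lemma kernel_sym: "x \<in> space M \<Longrightarrow> y \<in> space M \<Longrightarrow> k x y = k y x"
  using kernel unfolding is_kernel_def by auto

definition Tpos :: "('a \<Rightarrow> ennreal) \<Rightarrow> 'a \<Rightarrow> ennreal" where
  "Tpos u x = (\<integral>\<^sup>+ y. ennreal (k x y) * u y \<partial>M)"

lemma T_nn_eq_Tpos: "T_nn M k f = Tpos (\<lambda>y. ennreal (f y))"
  unfolding T_nn_def Tpos_def by (simp add: fun_eq_iff)

lemma gen_mean_eq_Tpos_pow: "gen_mean M k n = (Tpos ^^ n) (\<lambda>_. 1)"
  by (induction n) (auto simp: Tpos_def fun_eq_iff)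

lemma Tpos_measurable [measurable]:
  assumes [measurable]: "u \<in> borel_measurable M" shows "Tpos u \<in> borel_measurable M"
  unfolding Tpos_def[abs_def] by measurable

lemma Tpos_pow_measurable [measurable]:
  "u \<in> borel_measurable M \<Longrightarrow> (Tpos ^^ n) u \<in> borel_measurable M"
  by (induction n) auto

lemma Tpos_cong_AE: "AE y in M. u y = v y \<Longrightarrow> Tpos u = Tpos v"
  unfolding Tpos_def by (auto simp: fun_eq_iff intro!: nn_integral_cong_AE elim!: AE_mp)

lemma Tpos_cong: "(\<And>y. y \<in> space M \<Longrightarrow> u y = v y) \<Longrightarrow> Tpos u = Tpos v"
  by (intro Tpos_cong_AE AE_I2)

lemma Tpos_mono: "(\<And>y. y \<in> space M \<Longrightarrow> u y \<le> v y) \<Longrightarrow> Tpos u x \<le> Tpos v x"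
  unfolding Tpos_def by (auto intro!: nn_integral_mono mult_left_mono)

lemma Tpos_pow_mono:
  "(\<And>y. y \<in> space M \<Longrightarrow> u y \<le> v y) \<Longrightarrow> x \<in> space M \<Longrightarrow> (Tpos ^^ n) u x \<le> (Tpos ^^ n) v x"
  by (induction n arbitrary: x) (auto intro!: Tpos_mono)

lemma Tpos_add:
  assumes [measurable]: "u \<in> borel_measurable M" "v \<in> borel_measurable M" and "x \<in> space M"
  shows "Tpos (\<lambda>x. u x + v x) x = Tpos u x + Tpos v x"
  unfolding Tpos_def using \<open>x \<in> space M\<close> by (auto simp: distrib_left intro!: nn_integral_add)

lemma Tpos_pow_add:
  assumes [measurable]: "u \<in> borel_measurable M" "v \<in> borel_measurable M"
  shows "x \<in> space M \<Longrightarrow> (Tpos ^^ n) (\<lambda>x. u x + v x) x = (Tpos ^^ n) u x + (Tpos ^^ n) v x"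
proof (induction n arbitrary: x)
  case (Suc n)
  have "Tpos ((Tpos ^^ n) (\<lambda>x. u x + v x)) = Tpos (\<lambda>x. (Tpos ^^ n) u x + (Tpos ^^ n) v x)"
    by (rule Tpos_cong) (simp add: Suc)
  then show ?case using Suc.prems by (simp add: Tpos_add)
qed simp

lemma Tpos_cmult:
  assumes [measurable]: "u \<in> borel_measurable M" and "x \<in> space M"
  shows "Tpos (\<lambda>x. c * u x) x = c * Tpos u x"
  unfolding Tpos_def using \<open>x \<in> space M\<close>
  by (subst nn_integral_cmult[symmetric]) (auto simp: mult_ac)

lemma Tpos_pow_cmult:
  assumes [measurable]: "u \<in> borel_measurable M"
  shows "x \<in> space M \<Longrightarrow> (Tpos ^^ n) (\<lambda>x. c * u x) x = c * (Tpos ^^ n) u x"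
proof (induction n arbitrary: x)
  case (Suc n)
  have "Tpos ((Tpos ^^ n) (\<lambda>x. c * u x)) = Tpos (\<lambda>x. c * (Tpos ^^ n) u x)"
    by (rule Tpos_cong) (simp add: Suc)
  then show ?case using Suc.prems by (simp add: Tpos_cmult)
qed simp

lemma nn_integral_Tpos_mult_selfadjoint:
  assumes [measurable]: "u \<in> borel_measurable M" "v \<in> borel_measurable M"
  shows "(\<integral>\<^sup>+x. Tpos u x * v x \<partial>M) = (\<integral>\<^sup>+x. u x * Tpos v x \<partial>M)"
proof -
  have "(\<integral>\<^sup>+x. Tpos u x * v x \<partial>M) = (\<integral>\<^sup>+x. \<integral>\<^sup>+y. ennreal (k x y) * u y * v x \<partial>M \<partial>M)"
    unfolding Tpos_def by (intro nn_integral_cong) (simp add: nn_integral_multc)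
  also have "\<dots> = (\<integral>\<^sup>+y. \<integral>\<^sup>+x. ennreal (k x y) * u y * v x \<partial>M \<partial>M)"
    by (rule P.Fubini'[symmetric]) measurable
  also have "\<dots> = (\<integral>\<^sup>+y. \<integral>\<^sup>+x. u y * (ennreal (k y x) * v x) \<partial>M \<partial>M)"
    by (intro nn_integral_cong) (simp add: kernel_sym mult_ac)
  also have "\<dots> = (\<integral>\<^sup>+x. u x * Tpos v x \<partial>M)"
    unfolding Tpos_def by (intro nn_integral_cong nn_integral_cmult) auto
  finally show ?thesis .
qed

lemma nn_integral_Tpos_pow_mult:
  assumes [measurable]: "u \<in> borel_measurable M" "w \<in> borel_measurable M"
  shows "(\<integral>\<^sup>+x. (Tpos ^^ (a + n)) u x * w x \<partial>M) = (\<integral>\<^sup>+x. (Tpos ^^ a) u x * (Tpos ^^ n) w x \<partial>M)"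
proof (induction n arbitrary: a)
  case (Suc n)
  have "(\<integral>\<^sup>+x. (Tpos ^^ (a + Suc n)) u x * w x \<partial>M) = (\<integral>\<^sup>+x. (Tpos ^^ (Suc a)) u x * (Tpos ^^ n) w x \<partial>M)"
    using Suc[of "Suc a"] by simp
  also have "\<dots> = (\<integral>\<^sup>+x. (Tpos ^^ a) u x * (Tpos ^^ (Suc n)) w x \<partial>M)"
    by (simp add: nn_integral_Tpos_mult_selfadjoint)
  finally show ?case .
qed simp

lemma nn_integral_Tpos_pow_one_square:
  "(\<integral>\<^sup>+x. ((Tpos ^^ n) (\<lambda>_. 1) x)\<^sup>2 \<partial>M) = (\<integral>\<^sup>+x. (Tpos ^^ (n + n)) (\<lambda>_. 1) x \<partial>M)"
  using nn_integral_Tpos_pow_mult[of "\<lambda>_. 1" "\<lambda>_. 1" n n] by (simp add: power2_eq_square)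

lemma Tpos_pow_log_convex:
  assumes [measurable]: "g \<in> borel_measurable M"
  shows "(\<integral>\<^sup>+x. ((Tpos ^^ Suc n) g x)\<^sup>2 \<partial>M)\<^sup>2
     \<le> (\<integral>\<^sup>+x. ((Tpos ^^ Suc (Suc n)) g x)\<^sup>2 \<partial>M) * (\<integral>\<^sup>+x. ((Tpos ^^ n) g x)\<^sup>2 \<partial>M)"
proof -
  have "(\<integral>\<^sup>+x. ((Tpos ^^ Suc n) g x)\<^sup>2 \<partial>M)
      = (\<integral>\<^sup>+x. (Tpos ^^ Suc (Suc n)) g x * (Tpos ^^ n) g x \<partial>M)"
    using nn_integral_Tpos_pow_mult[of g "(Tpos ^^ n) g" "Suc n" 1] by (simp add: power2_eq_square)
  then show ?thesis by (simp only:) (rule Cauchy_Schwarz_nn_integral; measurable)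
qed

lemma Tpos_pow_geometric_growth:
  assumes [measurable]: "g \<in> borel_measurable M"
    and fin: "\<And>n. (\<integral>\<^sup>+x. ((Tpos ^^ n) g x)\<^sup>2 \<partial>M) \<noteq> \<infinity>"
    and pos: "(\<integral>\<^sup>+x. (g x)\<^sup>2 \<partial>M) \<noteq> 0" and "0 < r"
    and step: "ennreal r * (\<integral>\<^sup>+x. (g x)\<^sup>2 \<partial>M) \<le> (\<integral>\<^sup>+x. (Tpos g x)\<^sup>2 \<partial>M)"
  shows "ennreal (r ^ n) * (\<integral>\<^sup>+x. (g x)\<^sup>2 \<partial>M) \<le> (\<integral>\<^sup>+x. ((Tpos ^^ n) g x)\<^sup>2 \<partial>M)"
proof -
  define Q where "Q n = enn2real (\<integral>\<^sup>+x. ((Tpos ^^ n) g x)\<^sup>2 \<partial>M)" for n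
  have Q: "(\<integral>\<^sup>+x. ((Tpos ^^ n) g x)\<^sup>2 \<partial>M) = ennreal (Q n)" "0 \<le> Q n" for n
    using fin[of n] unfolding Q_def by (auto simp: less_top)
  have "ennreal ((Q (Suc n))\<^sup>2) \<le> ennreal (Q (Suc (Suc n)) * Q n)" for n
    using Tpos_pow_log_convex[of g n] unfolding Q by (simp add: ennreal_mult' ennreal_power Q)
  then have "(Q (Suc n))\<^sup>2 \<le> Q (Suc (Suc n)) * Q n" for n using Q by (simp add: ennreal_le_iff)
  moreover have "0 < Q 0" using pos Q[of 0] by (auto simp: less_le)
  moreover have "ennreal (r * Q 0) \<le> ennreal (Q 1)"
    using step Q[of 0] Q[of 1] \<open>0 < r\<close> by (simp add: ennreal_mult)
  then have "r * Q 0 \<le> Q 1" using Q by (simp add: ennreal_le_iff)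
  ultimately have "r ^ n * Q 0 \<le> Q n" using log_convex_seq_ge_geometric[of Q r n] \<open>0 < r\<close> by blast
  then show ?thesis using Q[of 0] Q[of n] \<open>0 < r\<close> by (simp add: ennreal_mult[symmetric] ennreal_leI)
qed

lemma nn_integral_Tpos_pow_square_le_bound:
  assumes [measurable]: "g \<in> borel_measurable M" and "0 \<le> L"
    and bound: "\<And>x. x \<in> space M \<Longrightarrow> g x \<le> ennreal L"
  shows "(\<integral>\<^sup>+x. ((Tpos ^^ n) g x)\<^sup>2 \<partial>M) \<le> ennreal (L\<^sup>2) * (\<integral>\<^sup>+x. ((Tpos ^^ n) (\<lambda>_. 1) x)\<^sup>2 \<partial>M)"
proof -
  have "(\<integral>\<^sup>+x. ((Tpos ^^ n) g x)\<^sup>2 \<partial>M) \<le> (\<integral>\<^sup>+x. ennreal (L\<^sup>2) * ((Tpos ^^ n) (\<lambda>_. 1) x)\<^sup>2 \<partial>M)"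
  proof (intro nn_integral_mono)
    fix x assume x: "x \<in> space M"
    have "(Tpos ^^ n) g x \<le> (Tpos ^^ n) (\<lambda>x. ennreal L * 1) x" using bound x by (intro Tpos_pow_mono) auto
    also have "\<dots> = ennreal L * (Tpos ^^ n) (\<lambda>_. 1) x"
      using x Tpos_pow_cmult[where u="\<lambda>_. 1" and c="ennreal L"] by simp
    finally have "((Tpos ^^ n) g x)\<^sup>2 \<le> (ennreal L * (Tpos ^^ n) (\<lambda>_. 1) x)\<^sup>2" by (rule power_mono) simp
    then show "((Tpos ^^ n) g x)\<^sup>2 \<le> ennreal (L\<^sup>2) * ((Tpos ^^ n) (\<lambda>_. 1) x)\<^sup>2"
      using \<open>0 \<le> L\<close> by (simp add: power_mult_distrib ennreal_power)
  qed
  also have "\<dots> = ennreal (L\<^sup>2) * (\<integral>\<^sup>+x. ((Tpos ^^ n) (\<lambda>_. 1) x)\<^sup>2 \<partial>M)"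
    by (rule nn_integral_cmult) measurable
  finally show ?thesis .
qed

lemma nn_integral_Tpos_square_eq_0:
  assumes [measurable]: "g \<in> borel_measurable M" and "(\<integral>\<^sup>+x. (g x)\<^sup>2 \<partial>M) = 0"
  shows "(\<integral>\<^sup>+x. (Tpos g x)\<^sup>2 \<partial>M) = 0"
proof -
  have "AE y in M. g y = 0" using assms(2) by (subst (asm) nn_integral_0_iff_AE) auto
  then have "Tpos g = Tpos (\<lambda>_. 0)" by (rule Tpos_cong_AE)
  then show ?thesis by (simp add: Tpos_def)
qed

lemma nn_integral_expected_size:
  "(\<integral>\<^sup>+x. expected_size M k x \<partial>M) = (\<Sum>m. \<integral>\<^sup>+x. (Tpos ^^ m) (\<lambda>_. 1) x \<partial>M)"
  unfolding expected_size_def gen_mean_eq_Tpos_pow by (rule nn_integral_suminf) measurable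

lemma chi_eq_top_iff: "chi M k = \<infinity> \<longleftrightarrow> (\<integral>\<^sup>+x. expected_size M k x \<partial>M) = \<infinity>"
proof -
  have "emeasure M (space M) \<noteq> \<infinity>" "emeasure M (space M) \<noteq> 0"
    using type_space unfolding type_space_def by auto
  then show ?thesis unfolding chi_def by (simp add: ennreal_divide_eq_top_iff)
qed

lemma nn_integral_Tpos_pow_one_square_finite:
  assumes "chi M k \<noteq> \<infinity>"
  shows "(\<integral>\<^sup>+x. ((Tpos ^^ n) (\<lambda>_. 1) x)\<^sup>2 \<partial>M) < \<infinity>"
proof -
  have "(\<integral>\<^sup>+x. ((Tpos ^^ n) (\<lambda>_. 1) x)\<^sup>2 \<partial>M) \<le> (\<Sum>m. \<integral>\<^sup>+x. (Tpos ^^ m) (\<lambda>_. 1) x \<partial>M)"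
    unfolding nn_integral_Tpos_pow_one_square
    using sum_le_suminf[of "\<lambda>m. \<integral>\<^sup>+x. (Tpos ^^ m) (\<lambda>_. 1) x \<partial>M" "{n+n}"] by auto
  also have "\<dots> < \<infinity>"
    using assms unfolding chi_eq_top_iff nn_integral_expected_size by (simp add: less_top)
  finally show ?thesis .
qed

lemma chi_eq_top_if_Tpos_pow_one_bounded_below:
  assumes low: "\<And>n. c \<le> ennreal K * (\<integral>\<^sup>+x. ((Tpos ^^ n) (\<lambda>_. 1) x)\<^sup>2 \<partial>M)" and "c \<noteq> 0"
  shows "chi M k = \<infinity>"
proof -
  define a where "a m = (\<integral>\<^sup>+x. (Tpos ^^ m) (\<lambda>_. 1) x \<partial>M)" for m
  have "of_nat N * c \<le> ennreal K * (\<Sum>m. a m)" for N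
  proof -
    have "of_nat N * c = (\<Sum>j<N. c)" by simp
    also have "\<dots> \<le> (\<Sum>j<N. ennreal K * a (2 * j))"
      using low nn_integral_Tpos_pow_one_square by (intro sum_mono) (simp add: a_def mult_2)
    also have "\<dots> = ennreal K * sum a ((\<lambda>j. 2 * j) ` {..<N})"
      by (subst sum.reindex) (auto simp: inj_on_def sum_distrib_left)
    also have "\<dots> \<le> ennreal K * sum a {..<2 * N}"
      by (intro mult_left_mono sum_mono2) auto
    also have "\<dots> \<le> ennreal K * (\<Sum>m. a m)"
      by (intro mult_left_mono sum_le_suminf) auto
    finally show ?thesis .
  qed
  then have "ennreal K * (\<Sum>m. a m) = \<infinity>"
    using \<open>c \<noteq> 0\<close> by (rule ennreal_eq_top_if_multiples_le)
  then show ?thesis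
    unfolding chi_eq_top_iff nn_integral_expected_size a_def by (simp add: ennreal_mult_eq_top_iff)
qed

section \<open>The supercritical case\<close>

lemma Tpos_truncation_approx:
  assumes [measurable]: "f \<in> borel_measurable M"
    and gt: "c < (\<integral>\<^sup>+x. (Tpos (\<lambda>y. ennreal (f y)) x)\<^sup>2 \<partial>M)"
  shows "\<exists>L::nat. c < (\<integral>\<^sup>+x. (Tpos (\<lambda>y. ennreal (min (f y) (real L))) x)\<^sup>2 \<partial>M)"
proof -
  define h where "h L y = ennreal (min (f y) (real L))" for L :: nat and y
  have [measurable]: "h L \<in> borel_measurable M" for L unfolding h_def by measurable
  have h_mono: "h L y \<le> h L' y" if "L \<le> L'" for L L' y
    using that unfolding h_def by (intro ennreal_leI) auto
  have Tpos_SUP: "Tpos (\<lambda>y. ennreal (f y)) x = (SUP L. Tpos (h L) x)" if "x \<in> space M" for x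
  proof -
    have "Tpos (\<lambda>y. ennreal (f y)) x = (\<integral>\<^sup>+ y. (SUP L. ennreal (k x y) * h L y) \<partial>M)"
      unfolding Tpos_def h_def by (simp add: SUP_ennreal_min_of_nat SUP_mult_left_ennreal[symmetric])
    also have "\<dots> = (SUP L. \<integral>\<^sup>+ y. ennreal (k x y) * h L y \<partial>M)"
      using that by (intro nn_integral_monotone_convergence_SUP)
        (auto simp: incseq_def le_fun_def h_mono intro!: mult_left_mono)
    finally show ?thesis unfolding Tpos_def .
  qed
  have "(\<integral>\<^sup>+x. (Tpos (\<lambda>y. ennreal (f y)) x)\<^sup>2 \<partial>M) = (\<integral>\<^sup>+x. (SUP L. (Tpos (h L) x)\<^sup>2) \<partial>M)"
  proof (intro nn_integral_cong)
    fix x assume "x \<in> space M"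
    then show "(Tpos (\<lambda>y. ennreal (f y)) x)\<^sup>2 = (SUP L. (Tpos (h L) x)\<^sup>2)"
      unfolding Tpos_SUP[OF \<open>x \<in> space M\<close>]
      by (intro SUP_power2_incseq_ennreal) (auto simp: incseq_def h_mono intro!: Tpos_mono)
  qed
  also have "\<dots> = (SUP L. \<integral>\<^sup>+x. (Tpos (h L) x)\<^sup>2 \<partial>M)"
    by (intro nn_integral_monotone_convergence_SUP)
      (auto simp: incseq_def le_fun_def h_mono intro!: power_mono Tpos_mono)
  finally show ?thesis using gt unfolding h_def by (simp add: less_SUP_iff)
qed

text \<open>By log-convexity $\|T^n g\| \ge \|g\|$ for all $n$, while $T^n g \le L\, T^n 1$.\<close>

lemma chi_eq_top_if_bounded_not_contracted:
  assumes [measurable]: "g \<in> borel_measurable M"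
    and bound: "\<And>x. g x \<le> ennreal L" and "0 \<le> L"
    and pos: "(\<integral>\<^sup>+x. (g x)\<^sup>2 \<partial>M) \<noteq> 0"
    and not_contracted: "(\<integral>\<^sup>+x. (g x)\<^sup>2 \<partial>M) \<le> (\<integral>\<^sup>+x. (Tpos g x)\<^sup>2 \<partial>M)"
  shows "chi M k = \<infinity>"
proof (rule ccontr)
  assume chi: "chi M k \<noteq> \<infinity>"
  have dominated: "(\<integral>\<^sup>+x. ((Tpos ^^ n) g x)\<^sup>2 \<partial>M)
      \<le> ennreal (L\<^sup>2) * (\<integral>\<^sup>+x. ((Tpos ^^ n) (\<lambda>_. 1) x)\<^sup>2 \<partial>M)" for n
    using bound \<open>0 \<le> L\<close> by (intro nn_integral_Tpos_pow_square_le_bound) auto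
  have "(\<integral>\<^sup>+x. ((Tpos ^^ n) g x)\<^sup>2 \<partial>M) < \<infinity>" for n
  proof -
    have "ennreal (L\<^sup>2) * (\<integral>\<^sup>+x. ((Tpos ^^ n) (\<lambda>_. 1) x)\<^sup>2 \<partial>M) < \<infinity>"
      using nn_integral_Tpos_pow_one_square_finite[OF chi] by (simp add: ennreal_mult_less_top)
    with dominated[of n] show ?thesis by (rule le_less_trans)
  qed
  then have "(\<integral>\<^sup>+x. (g x)\<^sup>2 \<partial>M) \<le> (\<integral>\<^sup>+x. ((Tpos ^^ n) g x)\<^sup>2 \<partial>M)" for n
    using Tpos_pow_geometric_growth[of g 1 n] not_contracted pos by (simp add: less_top)
  then have "(\<integral>\<^sup>+x. (g x)\<^sup>2 \<partial>M) \<le> ennreal (L\<^sup>2) * (\<integral>\<^sup>+x. ((Tpos ^^ n) (\<lambda>_. 1) x)\<^sup>2 \<partial>M)" for n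
    using dominated by (rule order_trans)
  then have "chi M k = \<infinity>" using pos by (rule chi_eq_top_if_Tpos_pow_one_bounded_below)
  with chi show False ..
qed

lemma chi_supercritical:
  assumes "supercritical M k"
  shows "chi M k = \<infinity>"
proof -
  have "1 < T_norm M k" using assms unfolding supercritical_def .
  then obtain f where f: "f \<in> borel_measurable M" "\<forall>x\<in>space M. 0 \<le> f x"
      "(\<integral>\<^sup>+ x. ennreal ((f x)\<^sup>2) \<partial>M) \<le> 1" and "1 < L2norm_enn M (T_nn M k f)"
    unfolding T_norm_def by (auto simp: less_SUP_iff)
  note [measurable] = f(1)
  have "1 < (\<integral>\<^sup>+x. (Tpos (\<lambda>y. ennreal (f y)) x)\<^sup>2 \<partial>M)"
    using \<open>1 < L2norm_enn M (T_nn M k f)\<close> unfolding L2norm_enn_def T_nn_eq_Tpos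
    by (rule enn_sqrt_gt_1_imp)
  then obtain L :: nat where L: "1 < (\<integral>\<^sup>+x. (Tpos (\<lambda>y. ennreal (min (f y) (real L))) x)\<^sup>2 \<partial>M)"
    using Tpos_truncation_approx[OF f(1)] by blast
  define g where "g y = ennreal (min (f y) (real L))" for y
  have [measurable]: "g \<in> borel_measurable M" unfolding g_def by measurable
  have "(\<integral>\<^sup>+x. (g x)\<^sup>2 \<partial>M) \<le> (\<integral>\<^sup>+ x. ennreal ((f x)\<^sup>2) \<partial>M)"
  proof (intro nn_integral_mono)
    fix x assume "x \<in> space M"
    then have "0 \<le> f x" using f(2) by blast
    then show "(g x)\<^sup>2 \<le> ennreal ((f x)\<^sup>2)"
      unfolding g_def by (simp add: ennreal_power[symmetric] power_mono ennreal_leI)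
  qed
  also have "\<dots> \<le> 1" by (fact f(3))
  also have "1 < (\<integral>\<^sup>+x. (Tpos g x)\<^sup>2 \<partial>M)" using L unfolding g_def .
  finally have not_contracted: "(\<integral>\<^sup>+x. (g x)\<^sup>2 \<partial>M) < (\<integral>\<^sup>+x. (Tpos g x)\<^sup>2 \<partial>M)" .
  then have "(\<integral>\<^sup>+x. (g x)\<^sup>2 \<partial>M) \<noteq> 0"
    using nn_integral_Tpos_square_eq_0[of g] by auto
  moreover have "g x \<le> ennreal (real L)" for x unfolding g_def by (intro ennreal_leI) auto
  ultimately show ?thesis
    using not_contracted by (intro chi_eq_top_if_bounded_not_contracted[of g "real L"]) auto
qed

section \<open>The critical case\<close>

lemma critical_nn_integral_Tpos_square_le_1:
  assumes "critical M k" and "f \<in> borel_measurable M" "\<forall>x\<in>space M. 0 \<le> f x"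
    and "(\<integral>\<^sup>+ x. ennreal ((f x)\<^sup>2) \<partial>M) \<le> 1"
  shows "(\<integral>\<^sup>+x. (Tpos (\<lambda>y. ennreal (f y)) x)\<^sup>2 \<partial>M) \<le> 1"
proof -
  have "L2norm_enn M (T_nn M k f) \<le> T_norm M k"
    unfolding T_norm_def using assms(2-4) by (intro SUP_upper) blast
  also have "\<dots> = 1" using \<open>critical M k\<close> unfolding critical_def .
  finally show ?thesis unfolding L2norm_enn_def T_nn_eq_Tpos by (rule enn_sqrt_le_1_imp)
qed

text \<open>By homogeneity, since $T_\kappa$ has norm $1$ on nonnegative unit vectors.\<close>

lemma critical_nn_integral_Tpos_square_le_real:
  assumes "critical M k" and [measurable]: "f \<in> borel_measurable M" and nonneg: "\<forall>x\<in>space M. 0 \<le> f x"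
    and a: "(\<integral>\<^sup>+x. ennreal ((f x)\<^sup>2) \<partial>M) = ennreal a" "0 < a"
  shows "(\<integral>\<^sup>+x. (Tpos (\<lambda>y. ennreal (f y)) x)\<^sup>2 \<partial>M) \<le> ennreal a"
proof -
  define c where "c = 1 / sqrt a"
  have "0 < c" "c\<^sup>2 * a = 1" using \<open>0 < a\<close> by (simp_all add: c_def power_divide)
  have "(\<integral>\<^sup>+ x. ennreal ((c * f x)\<^sup>2) \<partial>M) = ennreal (c\<^sup>2) * (\<integral>\<^sup>+ x. ennreal ((f x)\<^sup>2) \<partial>M)"
    by (simp add: power_mult_distrib ennreal_mult nn_integral_cmult)
  also have "\<dots> = 1" using a \<open>c\<^sup>2 * a = 1\<close> by (simp flip: ennreal_mult)
  finally have "(\<integral>\<^sup>+x. (Tpos (\<lambda>y. ennreal (c * f y)) x)\<^sup>2 \<partial>M) \<le> 1"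
    using \<open>0 < c\<close> nonneg by (intro critical_nn_integral_Tpos_square_le_1 assms) auto
  moreover have "Tpos (\<lambda>y. ennreal (c * f y)) x = ennreal c * Tpos (\<lambda>y. ennreal (f y)) x"
    if "x \<in> space M" for x
  proof -
    have "(\<lambda>y. ennreal (c * f y)) = (\<lambda>y. ennreal c * ennreal (f y))"
      using \<open>0 < c\<close> by (simp add: ennreal_mult' fun_eq_iff)
    then show ?thesis using Tpos_cmult[OF _ that] by simp
  qed
  ultimately have "(\<integral>\<^sup>+x. ennreal (c\<^sup>2) * (Tpos (\<lambda>y. ennreal (f y)) x)\<^sup>2 \<partial>M) \<le> 1"
    using \<open>0 < c\<close> by (simp add: power_mult_distrib ennreal_power cong: nn_integral_cong)
  then have "ennreal (c\<^sup>2) * (\<integral>\<^sup>+x. (Tpos (\<lambda>y. ennreal (f y)) x)\<^sup>2 \<partial>M) \<le> 1"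
    by (subst (asm) nn_integral_cmult) auto
  then have "ennreal a * (ennreal (c\<^sup>2) * (\<integral>\<^sup>+x. (Tpos (\<lambda>y. ennreal (f y)) x)\<^sup>2 \<partial>M)) \<le> ennreal a * 1"
    by (rule mult_left_mono) simp
  then show ?thesis
    using \<open>c\<^sup>2 * a = 1\<close> \<open>0 < a\<close> by (simp add: mult.assoc[symmetric] mult.commute flip: ennreal_mult)
qed

lemma critical_nn_integral_Tpos_square_le:
  assumes "critical M k" and [measurable]: "u \<in> borel_measurable M"
    and fin: "(\<integral>\<^sup>+x. (u x)\<^sup>2 \<partial>M) \<noteq> \<infinity>"
  shows "(\<integral>\<^sup>+x. (Tpos u x)\<^sup>2 \<partial>M) \<le> (\<integral>\<^sup>+x. (u x)\<^sup>2 \<partial>M)"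
proof (cases "(\<integral>\<^sup>+x. (u x)\<^sup>2 \<partial>M) = 0")
  case True then show ?thesis using nn_integral_Tpos_square_eq_0 by simp
next
  case False
  obtain a where a: "(\<integral>\<^sup>+x. (u x)\<^sup>2 \<partial>M) = ennreal a" "0 < a"
    using fin False by (cases "\<integral>\<^sup>+x. (u x)\<^sup>2 \<partial>M") (auto simp: less_le)
  txt \<open>$u$ is finite almost everywhere, so it may be replaced by the real function
    \<open>enn2real \<circ> u\<close>.\<close>
  have "AE x in M. (u x)\<^sup>2 \<noteq> \<infinity>" using fin by (intro nn_integral_PInf_AE) auto
  then have u_finite: "AE x in M. ennreal (enn2real (u x)) = u x"
  proof eventually_elim
    case (elim x)
    then have "u x \<noteq> \<infinity>" by auto
    then show ?case by (simp add: less_top)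
  qed
  have "(\<integral>\<^sup>+x. ennreal ((enn2real (u x))\<^sup>2) \<partial>M) = (\<integral>\<^sup>+x. (u x)\<^sup>2 \<partial>M)"
    using u_finite by (intro nn_integral_cong_AE, eventually_elim) (metis enn2real_nonneg ennreal_power)
  then have "(\<integral>\<^sup>+x. (Tpos (\<lambda>y. ennreal (enn2real (u y))) x)\<^sup>2 \<partial>M) \<le> ennreal a"
    using a by (intro critical_nn_integral_Tpos_square_le_real assms) auto
  moreover have "Tpos (\<lambda>y. ennreal (enn2real (u y))) = Tpos u" using u_finite by (rule Tpos_cong_AE)
  ultimately show ?thesis using a by simp
qed

lemma critical_nn_integral_Tpos_pow_square_le:
  assumes "critical M k" and [measurable]: "u \<in> borel_measurable M"
    and fin: "(\<integral>\<^sup>+x. (u x)\<^sup>2 \<partial>M) \<noteq> \<infinity>"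
  shows "(\<integral>\<^sup>+x. ((Tpos ^^ n) u x)\<^sup>2 \<partial>M) \<le> (\<integral>\<^sup>+x. (u x)\<^sup>2 \<partial>M)"
proof (induction n)
  case (Suc n)
  then have "(\<integral>\<^sup>+x. ((Tpos ^^ n) u x)\<^sup>2 \<partial>M) \<noteq> \<infinity>" using fin by (auto simp: top_unique)
  then have "(\<integral>\<^sup>+x. ((Tpos ^^ Suc n) u x)\<^sup>2 \<partial>M) \<le> (\<integral>\<^sup>+x. ((Tpos ^^ n) u x)\<^sup>2 \<partial>M)"
    using critical_nn_integral_Tpos_square_le[OF \<open>critical M k\<close>] by simp
  with Suc show ?case by simp
qed simp

lemma critical_Tpos_pow_almost_extremal:
  assumes "critical M k" and [measurable]: "u \<in> borel_measurable M"
    and norm: "(\<integral>\<^sup>+x. (u x)\<^sup>2 \<partial>M) \<le> 1" and "0 < b"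
    and almost: "ennreal (b\<^sup>2) < (\<integral>\<^sup>+x. (Tpos u x)\<^sup>2 \<partial>M)"
  shows "ennreal (b ^ (2 * n + 4)) \<le> (\<integral>\<^sup>+x. ((Tpos ^^ Suc n) u x)\<^sup>2 \<partial>M)"
proof -
  have fin: "(\<integral>\<^sup>+x. (u x)\<^sup>2 \<partial>M) \<noteq> \<infinity>" using norm by (auto simp: top_unique)
  have contracted: "(\<integral>\<^sup>+x. (Tpos u x)\<^sup>2 \<partial>M) \<le> (\<integral>\<^sup>+x. (u x)\<^sup>2 \<partial>M)"
    by (rule critical_nn_integral_Tpos_square_le[OF \<open>critical M k\<close> _ fin]) measurable
  have "ennreal (b\<^sup>2) * (\<integral>\<^sup>+x. (u x)\<^sup>2 \<partial>M) \<le> ennreal (b\<^sup>2) * 1"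
    using norm by (intro mult_left_mono) auto
  also have "\<dots> \<le> (\<integral>\<^sup>+x. (Tpos u x)\<^sup>2 \<partial>M)" using almost by simp
  finally have step: "ennreal (b\<^sup>2) * (\<integral>\<^sup>+x. (u x)\<^sup>2 \<partial>M) \<le> (\<integral>\<^sup>+x. (Tpos u x)\<^sup>2 \<partial>M)" .
  have iterates_finite: "(\<integral>\<^sup>+x. ((Tpos ^^ m) u x)\<^sup>2 \<partial>M) \<noteq> \<infinity>" for m
    using critical_nn_integral_Tpos_pow_square_le[OF \<open>critical M k\<close> _ fin, of m] fin
    by (auto simp: top_unique)
  have "(\<integral>\<^sup>+x. (u x)\<^sup>2 \<partial>M) \<noteq> 0"
    using nn_integral_Tpos_square_eq_0[of u] almost by auto
  then have growth: "ennreal ((b\<^sup>2) ^ Suc n) * (\<integral>\<^sup>+x. (u x)\<^sup>2 \<partial>M)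
      \<le> (\<integral>\<^sup>+x. ((Tpos ^^ Suc n) u x)\<^sup>2 \<partial>M)"
    using \<open>0 < b\<close> by (intro Tpos_pow_geometric_growth[OF _ iterates_finite _ _ step]) simp_all
  have "2 * n + 4 = 2 * Suc n + 2" by simp
  then have "b ^ (2 * n + 4) = (b\<^sup>2) ^ Suc n * b\<^sup>2" by (simp only: power_add power_mult)
  then have "ennreal (b ^ (2 * n + 4)) = ennreal ((b\<^sup>2) ^ Suc n) * ennreal (b\<^sup>2)"
    by (simp add: ennreal_mult)
  also have "\<dots> \<le> ennreal ((b\<^sup>2) ^ Suc n) * (\<integral>\<^sup>+x. (u x)\<^sup>2 \<partial>M)"
    using almost contracted by (intro mult_left_mono) auto
  also have "\<dots> \<le> (\<integral>\<^sup>+x. ((Tpos ^^ Suc n) u x)\<^sup>2 \<partial>M)" by (fact growth)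
  finally show ?thesis .
qed

text \<open>Splitting $h = \min(h, L) + (h - L)^+$: the second part stays small under the
  contraction $T^n$, so the bounded first part carries a fixed share of $\|T^n h\|^2$.\<close>

lemma critical_Tpos_pow_one_lower_bound:
  assumes "critical M k" and [measurable]: "h \<in> borel_measurable M" and "0 \<le> L"
    and large: "ennreal (1/2) \<le> (\<integral>\<^sup>+x. ((Tpos ^^ n) h x)\<^sup>2 \<partial>M)"
    and tail: "(\<integral>\<^sup>+x. (h x - ennreal L)\<^sup>2 \<partial>M) \<le> ennreal (1/8)"
  shows "ennreal (1/8) \<le> ennreal (L\<^sup>2) * (\<integral>\<^sup>+x. ((Tpos ^^ n) (\<lambda>_. 1) x)\<^sup>2 \<partial>M)"
proof -
  define v where "v x = min (h x) (ennreal L)" for x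
  define w where "w x = h x - ennreal L" for x
  have [measurable]: "v \<in> borel_measurable M" "w \<in> borel_measurable M"
    unfolding v_def w_def by measurable
  have "(\<integral>\<^sup>+x. ((Tpos ^^ n) w x)\<^sup>2 \<partial>M) \<le> (\<integral>\<^sup>+x. (w x)\<^sup>2 \<partial>M)"
    using tail unfolding w_def
    by (intro critical_nn_integral_Tpos_pow_square_le \<open>critical M k\<close>) (auto simp: top_unique)
  then have w_small: "(\<integral>\<^sup>+x. ((Tpos ^^ n) w x)\<^sup>2 \<partial>M) \<le> ennreal (1/8)"
    using tail unfolding w_def by simp
  have "ennreal (1/2) \<le> (\<integral>\<^sup>+x. ((Tpos ^^ n) (\<lambda>x. v x + w x) x)\<^sup>2 \<partial>M)"
    using large unfolding v_def w_def by (simp flip: ennreal_min_add_diff)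
  also have "\<dots> = (\<integral>\<^sup>+x. ((Tpos ^^ n) v x + (Tpos ^^ n) w x)\<^sup>2 \<partial>M)"
    by (intro nn_integral_cong) (simp add: Tpos_pow_add)
  also have "\<dots> \<le> (\<integral>\<^sup>+x. 2 * ((Tpos ^^ n) v x)\<^sup>2 + 2 * ((Tpos ^^ n) w x)\<^sup>2 \<partial>M)"
    by (intro nn_integral_mono ennreal_power2_add_le)
  also have "\<dots> = 2 * (\<integral>\<^sup>+x. ((Tpos ^^ n) v x)\<^sup>2 \<partial>M) + 2 * (\<integral>\<^sup>+x. ((Tpos ^^ n) w x)\<^sup>2 \<partial>M)"
    by (simp add: nn_integral_add nn_integral_cmult)
  also have "\<dots> \<le> 2 * (\<integral>\<^sup>+x. ((Tpos ^^ n) v x)\<^sup>2 \<partial>M) + 2 * ennreal (1/8)"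
    using w_small by (intro add_left_mono mult_left_mono) auto
  finally have "ennreal (1/8) \<le> (\<integral>\<^sup>+x. ((Tpos ^^ n) v x)\<^sup>2 \<partial>M)"
    by (rule ennreal_eighth_le)
  also have "\<dots> \<le> ennreal (L\<^sup>2) * (\<integral>\<^sup>+x. ((Tpos ^^ n) (\<lambda>_. 1) x)\<^sup>2 \<partial>M)"
    using \<open>0 \<le> L\<close> by (intro nn_integral_Tpos_pow_square_le_bound) (auto simp: v_def)
  finally show ?thesis .
qed

lemma Tpos_eq_T_op_AE:
  assumes "AE x in M. integrable M (\<lambda>y. k x y * f y)" and "\<And>x. x \<in> space M \<Longrightarrow> 0 \<le> f x"
  shows "AE x in M. Tpos (\<lambda>y. ennreal (f y)) x = ennreal (T_op M k f x)"
  using assms(1)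
proof (rule AE_mp, intro AE_I2 impI)
  fix x assume "x \<in> space M" and "integrable M (\<lambda>y. k x y * f y)"
  have "Tpos (\<lambda>y. ennreal (f y)) x = (\<integral>\<^sup>+ y. ennreal (k x y * f y) \<partial>M)"
    unfolding Tpos_def using \<open>x \<in> space M\<close> assms(2) kernel_nonneg
    by (intro nn_integral_cong) (simp add: ennreal_mult)
  also have "\<dots> = ennreal (\<integral> y. k x y * f y \<partial>M)"
    using \<open>x \<in> space M\<close> \<open>integrable M _\<close> assms(2) kernel_nonneg
    by (intro nn_integral_eq_integral AE_I2) auto
  finally show "Tpos (\<lambda>y. ennreal (f y)) x = ennreal (T_op M k f x)" unfolding T_op_def .
qed

lemma critical_almost_extremal_exists:
  assumes "critical M k" and "0 < b" "b < 1"
  shows "\<exists>f. f \<in> borel_measurable M \<and> (\<forall>x\<in>space M. 0 \<le> f x) \<and>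
    (\<integral>\<^sup>+ x. ennreal ((f x)\<^sup>2) \<partial>M) \<le> 1 \<and> ennreal (b\<^sup>2) < (\<integral>\<^sup>+x. (Tpos (\<lambda>y. ennreal (f y)) x)\<^sup>2 \<partial>M)"
proof -
  have "ennreal b < T_norm M k" using assms unfolding critical_def by simp
  then obtain f where "f \<in> borel_measurable M" "\<forall>x\<in>space M. 0 \<le> f x"
    "(\<integral>\<^sup>+ x. ennreal ((f x)\<^sup>2) \<partial>M) \<le> 1" and almost: "ennreal b < L2norm_enn M (T_nn M k f)"
    unfolding T_norm_def by (auto simp: less_SUP_iff)
  moreover have "ennreal (b\<^sup>2) < (\<integral>\<^sup>+x. (Tpos (\<lambda>y. ennreal (f y)) x)\<^sup>2 \<partial>M)"
    using almost \<open>0 < b\<close> unfolding L2norm_enn_def T_nn_eq_Tpos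
    by (intro enn_sqrt_gt_imp) auto
  ultimately show ?thesis by blast
qed

lemma chi_critical_compact:
  assumes crit: "critical M k" and compact: "T_compact M k"
  shows "chi M k = \<infinity>"
proof -
  define b where "b j = 1 - 1 / (real j + 2)" for j :: nat
  have b: "0 < b j" "b j < 1" for j unfolding b_def by (auto simp: field_simps)
  have "\<exists>f. f \<in> borel_measurable M \<and> (\<forall>x\<in>space M. 0 \<le> f x) \<and>
      (\<integral>\<^sup>+ x. ennreal ((f x)\<^sup>2) \<partial>M) \<le> 1 \<and>
      ennreal ((b j)\<^sup>2) < (\<integral>\<^sup>+x. (Tpos (\<lambda>y. ennreal (f y)) x)\<^sup>2 \<partial>M)" for j
    using b by (intro critical_almost_extremal_exists crit)
  then obtain F where [measurable]: "\<And>j. F j \<in> borel_measurable M"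
    and F_nonneg: "\<And>j x. x \<in> space M \<Longrightarrow> 0 \<le> F j x"
    and F_norm: "\<And>j. (\<integral>\<^sup>+ x. ennreal ((F j x)\<^sup>2) \<partial>M) \<le> 1"
    and F_almost: "\<And>j. ennreal ((b j)\<^sup>2) < (\<integral>\<^sup>+x. (Tpos (\<lambda>y. ennreal (F j y)) x)\<^sup>2 \<partial>M)"
    by metis
  have F_L2: "in_L2 M (F j)" for j
    unfolding in_L2_def using order_le_less_trans[OF F_norm[of j]] by simp
  define G where "G j = T_op M k (F j)" for j
  have G_L2: "in_L2 M (G j)" for j using compact F_L2 unfolding T_compact_def G_def by blast
  have [measurable]: "G j \<in> borel_measurable M" for j using G_L2 unfolding in_L2_def by simp
  have Tpos_F: "AE x in M. Tpos (\<lambda>y. ennreal (F j y)) x = ennreal (G j x)" for j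
    using compact F_L2 F_nonneg unfolding G_def T_compact_def by (intro Tpos_eq_T_op_AE) blast+
  obtain r where r: "strict_mono r" and "L2_Cauchy M (\<lambda>n. G (r n))"
    using compact F_L2 F_norm unfolding T_compact_def L2_Cauchy_def G_def by meson
  then obtain N L where tail: "\<And>m. m \<ge> N \<Longrightarrow>
      (\<integral>\<^sup>+x. ennreal ((max 0 (G (r m) x - real L))\<^sup>2) \<partial>M) < ennreal (1/8)"
    using L2_Cauchy_uniform_truncation[of M "\<lambda>n. G (r n)" "1/8"] G_L2 by auto
  have "ennreal (1/8) \<le> ennreal ((real L)\<^sup>2) * (\<integral>\<^sup>+x. ((Tpos ^^ n) (\<lambda>_. 1) x)\<^sup>2 \<partial>M)" for n
  proof (rule critical_Tpos_pow_one_lower_bound[OF crit])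
    define j where "j = r (max N (4 * n + 8))"
    have "4 * n + 8 \<le> j" unfolding j_def using seq_suble[OF r, of "max N (4 * n + 8)"] by simp
    let ?u = "\<lambda>y. ennreal (F j y)"
    have "ennreal (1/2) \<le> ennreal (b j ^ (2 * n + 4))"
      unfolding b_def using \<open>4 * n + 8 \<le> j\<close>
      by (intro ennreal_leI half_le_power_one_minus_inverse) simp
    also have "\<dots> \<le> (\<integral>\<^sup>+x. ((Tpos ^^ Suc n) ?u x)\<^sup>2 \<partial>M)"
    proof (rule critical_Tpos_pow_almost_extremal[OF crit _ _ b(1)])
      show "(\<integral>\<^sup>+x. (?u x)\<^sup>2 \<partial>M) \<le> 1"
        using F_norm[of j] F_nonneg by (simp add: ennreal_power cong: nn_integral_cong)
      show "ennreal ((b j)\<^sup>2) < (\<integral>\<^sup>+x. (Tpos ?u x)\<^sup>2 \<partial>M)" by (fact F_almost)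
    qed measurable
    also have "(Tpos ^^ Suc n) ?u = (Tpos ^^ n) (Tpos ?u)"
      by (simp add: funpow_Suc_right del: funpow.simps)
    finally show "ennreal (1/2) \<le> (\<integral>\<^sup>+x. ((Tpos ^^ n) (Tpos ?u) x)\<^sup>2 \<partial>M)" .
    have "(\<integral>\<^sup>+x. (Tpos ?u x - ennreal (real L))\<^sup>2 \<partial>M)
        = (\<integral>\<^sup>+x. ennreal ((max 0 (G j x - real L))\<^sup>2) \<partial>M)"
      using Tpos_F[of j]
      by (intro nn_integral_cong_AE, eventually_elim)
        (auto simp: ennreal_minus max_def ennreal_neg ennreal_power)
    also have "\<dots> \<le> ennreal (1/8)" using tail[of "max N (4 * n + 8)"] by (simp add: j_def)
    finally show "(\<integral>\<^sup>+x. (Tpos ?u x - ennreal (real L))\<^sup>2 \<partial>M) \<le> ennreal (1/8)" .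
  qed auto
  then show ?thesis by (rule chi_eq_top_if_Tpos_pow_one_bounded_below) simp
qed

end

section \<open>Hilbert--Schmidt kernels give compact operators\<close>

text \<open>A list of triples $(c, A, B)$ encodes the step kernel $\sum c\, 1_{A \times B}$ and the
  finite-rank operator it induces.\<close>

definition step_kernel :: "(real \<times> 'a set \<times> 'a set) list \<Rightarrow> 'a \<times> 'a \<Rightarrow> real" where
  "step_kernel L z = (\<Sum>(c, A, B)\<leftarrow>L. c * indicator A (fst z) * indicator B (snd z))"

definition step_op :: "'a measure \<Rightarrow> (real \<times> 'a set \<times> 'a set) list \<Rightarrow> ('a \<Rightarrow> real) \<Rightarrow> 'a \<Rightarrow> real" where
  "step_op M L f x = (\<Sum>(c, A, B)\<leftarrow>L. c * indicator A x * (\<integral>y. indicator B y * f y \<partial>M))"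

definition step_sets :: "'a measure \<Rightarrow> (real \<times> 'a set \<times> 'a set) list \<Rightarrow> bool" where
  "step_sets M L \<longleftrightarrow> (\<forall>(c, A, B)\<in>set L. A \<in> sets M \<and> B \<in> sets M)"

definition step_approximable :: "'a measure \<Rightarrow> ('a \<times> 'a \<Rightarrow> real) \<Rightarrow> bool" where
  "step_approximable M u \<longleftrightarrow> (\<forall>e>0. \<exists>L. step_sets M L \<and>
     (\<integral>\<^sup>+z. ennreal ((u z - step_kernel L z)\<^sup>2) \<partial>(M \<Otimes>\<^sub>M M)) < ennreal e)"

lemma step_kernel_simps [simp]:
  "step_kernel [] z = 0"
  "step_kernel ((c, A, B) # L) z = c * indicator A (fst z) * indicator B (snd z) + step_kernel L z"
  "step_kernel (L1 @ L2) z = step_kernel L1 z + step_kernel L2 z"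
  by (simp_all add: step_kernel_def)

lemma step_kernel_scale: "step_kernel (map (\<lambda>p. (a * fst p, snd p)) L) z = a * step_kernel L z"
  unfolding step_kernel_def by (induction L) (auto simp: algebra_simps)

lemma step_op_simps [simp]:
  "step_op M [] f x = 0"
  "step_op M ((c, A, B) # L) f x = c * indicator A x * (\<integral>y. indicator B y * f y \<partial>M) + step_op M L f x"
  by (simp_all add: step_op_def)

lemma step_sets_simps [simp]:
  "step_sets M []"
  "step_sets M ((c, A, B) # L) \<longleftrightarrow> A \<in> sets M \<and> B \<in> sets M \<and> step_sets M L"
  "step_sets M (L1 @ L2) \<longleftrightarrow> step_sets M L1 \<and> step_sets M L2"
  "step_sets M (map (\<lambda>p. (a * fst p, snd p)) L) \<longleftrightarrow> step_sets M L"
  by (fastforce simp: step_sets_def)+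

lemma step_kernel_measurable [measurable]:
  "step_sets M L \<Longrightarrow> step_kernel L \<in> borel_measurable (M \<Otimes>\<^sub>M M)"
proof (induction L)
  case Nil then show ?case by (simp add: fun_eq_iff[of "step_kernel []"])
next
  case (Cons p L)
  obtain c A B where p: "p = (c, A, B)" by (cases p)
  with Cons have [measurable]: "A \<in> sets M" "B \<in> sets M" "step_kernel L \<in> borel_measurable (M \<Otimes>\<^sub>M M)"
    by auto
  have "step_kernel (p # L) = (\<lambda>z. c * indicator A (fst z) * indicator B (snd z) + step_kernel L z)"
    by (simp add: p fun_eq_iff)
  also have "\<dots> \<in> borel_measurable (M \<Otimes>\<^sub>M M)" by measurable
  finally show ?case .
qed

lemma step_op_measurable [measurable]: "step_sets M L \<Longrightarrow> step_op M L f \<in> borel_measurable M"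
proof (induction L)
  case Nil then show ?case by (simp add: fun_eq_iff[of "step_op M [] f"])
next
  case (Cons p L)
  obtain c A B where p: "p = (c, A, B)" by (cases p)
  with Cons have [measurable]: "A \<in> sets M" "step_op M L f \<in> borel_measurable M" by auto
  have "step_op M (p # L) f = (\<lambda>x. c * indicator A x * (\<integral>y. indicator B y * f y \<partial>M) + step_op M L f x)"
    by (simp add: p fun_eq_iff)
  also have "\<dots> \<in> borel_measurable M" by measurable
  finally show ?case .
qed

context finite_measure
begin

lemma finite_measure_square: "finite_measure (M \<Otimes>\<^sub>M M)"
  by (intro finite_measure_pair_measure finite_measure_axioms)

lemma step_approximable_step_kernel: "step_sets M L \<Longrightarrow> step_approximable M (step_kernel L)"
  unfolding step_approximable_def by (auto intro!: exI[of _ L])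

lemma step_approximable_cong:
  "(\<And>z. z \<in> space (M \<Otimes>\<^sub>M M) \<Longrightarrow> u z = v z) \<Longrightarrow> step_approximable M u \<longleftrightarrow> step_approximable M v"
  unfolding step_approximable_def by (simp cong: nn_integral_cong)

lemma step_approximable_limit:
  assumes [measurable]: "u \<in> borel_measurable (M \<Otimes>\<^sub>M M)"
    and close: "\<And>e. 0 < e \<Longrightarrow> \<exists>v. v \<in> borel_measurable (M \<Otimes>\<^sub>M M) \<and> step_approximable M v \<and>
      (\<integral>\<^sup>+z. ennreal ((u z - v z)\<^sup>2) \<partial>(M \<Otimes>\<^sub>M M)) < ennreal e"
  shows "step_approximable M u"
  unfolding step_approximable_def
proof (intro allI impI)
  fix e :: real assume "0 < e"
  then obtain v where [measurable]: "v \<in> borel_measurable (M \<Otimes>\<^sub>M M)" and "step_approximable M v"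
    and uv: "(\<integral>\<^sup>+z. ennreal ((u z - v z)\<^sup>2) \<partial>(M \<Otimes>\<^sub>M M)) < ennreal (e/8)"
    using close[of "e/8"] by auto
  then obtain L where L: "step_sets M L"
    and vL: "(\<integral>\<^sup>+z. ennreal ((v z - step_kernel L z)\<^sup>2) \<partial>(M \<Otimes>\<^sub>M M)) < ennreal (e/8)"
    using \<open>0 < e\<close> unfolding step_approximable_def by (meson divide_pos_pos zero_less_numeral)
  have "(\<integral>\<^sup>+z. ennreal ((u z - step_kernel L z)\<^sup>2) \<partial>(M \<Otimes>\<^sub>M M))
      \<le> 2 * (\<integral>\<^sup>+z. ennreal ((u z - v z)\<^sup>2) \<partial>(M \<Otimes>\<^sub>M M))
        + 2 * (\<integral>\<^sup>+z. ennreal ((v z - step_kernel L z)\<^sup>2) \<partial>(M \<Otimes>\<^sub>M M))"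
    using L by (intro nn_integral_power2_diff_le) measurable
  also have "\<dots> < ennreal e" using uv vL \<open>0 < e\<close> by (intro ennreal_two_mult_add_less) auto
  finally show "\<exists>L. step_sets M L \<and>
      (\<integral>\<^sup>+z. ennreal ((u z - step_kernel L z)\<^sup>2) \<partial>(M \<Otimes>\<^sub>M M)) < ennreal e"
    using L by blast
qed

lemma step_approximable_add:
  assumes [measurable]: "u \<in> borel_measurable (M \<Otimes>\<^sub>M M)" "v \<in> borel_measurable (M \<Otimes>\<^sub>M M)"
    and "step_approximable M u" "step_approximable M v"
  shows "step_approximable M (\<lambda>z. u z + v z)"
  unfolding step_approximable_def
proof (intro allI impI)
  fix e :: real assume "0 < e"
  then have "0 < e / 8" by simp
  then obtain L1 L2 where L: "step_sets M L1" "step_sets M L2"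
    and L1: "(\<integral>\<^sup>+z. ennreal ((u z - step_kernel L1 z)\<^sup>2) \<partial>(M \<Otimes>\<^sub>M M)) < ennreal (e/8)"
    and L2: "(\<integral>\<^sup>+z. ennreal ((v z - step_kernel L2 z)\<^sup>2) \<partial>(M \<Otimes>\<^sub>M M)) < ennreal (e/8)"
    using assms(3,4) unfolding step_approximable_def by meson
  have "(\<integral>\<^sup>+z. ennreal ((u z + v z - step_kernel (L1 @ L2) z)\<^sup>2) \<partial>(M \<Otimes>\<^sub>M M))
      = (\<integral>\<^sup>+z. ennreal (((u z - step_kernel L1 z) + (v z - step_kernel L2 z))\<^sup>2) \<partial>(M \<Otimes>\<^sub>M M))"
    by (simp add: algebra_simps)
  also have "\<dots> \<le> 2 * (\<integral>\<^sup>+z. ennreal ((u z - step_kernel L1 z)\<^sup>2) \<partial>(M \<Otimes>\<^sub>M M))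
      + 2 * (\<integral>\<^sup>+z. ennreal ((v z - step_kernel L2 z)\<^sup>2) \<partial>(M \<Otimes>\<^sub>M M))"
    using L by (intro nn_integral_power2_add_le) measurable
  also have "\<dots> < ennreal e" using L1 L2 \<open>0 < e\<close> by (intro ennreal_two_mult_add_less) auto
  finally show "\<exists>L. step_sets M L \<and>
      (\<integral>\<^sup>+z. ennreal ((u z + v z - step_kernel L z)\<^sup>2) \<partial>(M \<Otimes>\<^sub>M M)) < ennreal e"
    using L by (intro exI[of _ "L1 @ L2"]) auto
qed

lemma step_approximable_scale:
  assumes [measurable]: "u \<in> borel_measurable (M \<Otimes>\<^sub>M M)" and "step_approximable M u"
  shows "step_approximable M (\<lambda>z. a * u z)"
proof (cases "a = 0")
  case True
  then have "(\<lambda>z. a * u z) = step_kernel []" by (simp add: fun_eq_iff)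
  then show ?thesis using step_approximable_step_kernel[of "[]"] by simp
next
  case False
  then have "0 < a\<^sup>2" by simp
  show ?thesis
    unfolding step_approximable_def
  proof (intro allI impI)
    fix e :: real assume "0 < e"
    then obtain L where L: "step_sets M L"
      and uL: "(\<integral>\<^sup>+z. ennreal ((u z - step_kernel L z)\<^sup>2) \<partial>(M \<Otimes>\<^sub>M M)) < ennreal (e / a\<^sup>2)"
      using assms(2) \<open>0 < a\<^sup>2\<close> unfolding step_approximable_def by (meson divide_pos_pos)
    let ?aL = "map (\<lambda>p. (a * fst p, snd p)) L"
    have "(\<integral>\<^sup>+z. ennreal ((a * u z - step_kernel ?aL z)\<^sup>2) \<partial>(M \<Otimes>\<^sub>M M))
        = (\<integral>\<^sup>+z. ennreal (a\<^sup>2) * ennreal ((u z - step_kernel L z)\<^sup>2) \<partial>(M \<Otimes>\<^sub>M M))"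
      by (intro nn_integral_cong)
        (simp add: step_kernel_scale power_mult_distrib ennreal_mult' flip: right_diff_distrib)
    also have "\<dots> = ennreal (a\<^sup>2) * (\<integral>\<^sup>+z. ennreal ((u z - step_kernel L z)\<^sup>2) \<partial>(M \<Otimes>\<^sub>M M))"
      using L by (intro nn_integral_cmult) measurable
    also have "\<dots> < ennreal (a\<^sup>2) * ennreal (e / a\<^sup>2)"
      using uL \<open>0 < a\<^sup>2\<close> by (intro ennreal_mult_strict_left_mono) auto
    also have "\<dots> = ennreal e" using \<open>0 < a\<^sup>2\<close> \<open>0 < e\<close> by (simp flip: ennreal_mult)
    finally show "\<exists>L. step_sets M L \<and>
        (\<integral>\<^sup>+z. ennreal ((a * u z - step_kernel L z)\<^sup>2) \<partial>(M \<Otimes>\<^sub>M M)) < ennreal e"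
      using L by (intro exI[of _ ?aL]) simp
  qed
qed

lemma step_approximable_incseq_limit:
  assumes [measurable]: "\<And>i. U i \<in> borel_measurable (M \<Otimes>\<^sub>M M)" "u \<in> borel_measurable (M \<Otimes>\<^sub>M M)"
    and nonneg: "\<And>i z. 0 \<le> U i z" and "incseq U"
    and lim: "\<And>z. z \<in> space (M \<Otimes>\<^sub>M M) \<Longrightarrow> (\<lambda>i. U i z) \<longlonglongrightarrow> u z"
    and fin: "(\<integral>\<^sup>+z. ennreal ((u z)\<^sup>2) \<partial>(M \<Otimes>\<^sub>M M)) < \<infinity>"
    and approx: "\<And>i. step_approximable M (U i)"
  shows "step_approximable M u"
proof (rule step_approximable_limit)
  fix e :: real assume "0 < e"
  have mono: "U i z \<le> U j z" if "i \<le> j" for i j z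
    by (rule le_funD[OF incseqD[OF \<open>incseq U\<close> that]])
  have U_le: "U i z \<le> u z" if "z \<in> space (M \<Otimes>\<^sub>M M)" for i z
    using mono lim[OF that] by (intro incseq_le) (auto simp: incseq_def)
  have "\<exists>i. (\<integral>\<^sup>+z. ennreal ((u z - U i z)\<^sup>2) \<partial>(M \<Otimes>\<^sub>M M)) < ennreal e"
  proof (rule nn_integral_decseq_eventually_less)
    show "ennreal ((u z - U (Suc i) z)\<^sup>2) \<le> ennreal ((u z - U i z)\<^sup>2)"
      if "z \<in> space (M \<Otimes>\<^sub>M M)" for i z
      using mono[of i "Suc i" z] U_le[OF that] by (intro ennreal_leI power_mono) auto
    have "(\<integral>\<^sup>+z. ennreal ((u z - U 0 z)\<^sup>2) \<partial>(M \<Otimes>\<^sub>M M)) \<le> (\<integral>\<^sup>+z. ennreal ((u z)\<^sup>2) \<partial>(M \<Otimes>\<^sub>M M))"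
      using U_le nonneg by (intro nn_integral_mono ennreal_leI power_mono) auto
    with fin show "(\<integral>\<^sup>+z. ennreal ((u z - U 0 z)\<^sup>2) \<partial>(M \<Otimes>\<^sub>M M)) < \<infinity>" by simp
    show "(INF i. ennreal ((u z - U i z)\<^sup>2)) = 0" if "z \<in> space (M \<Otimes>\<^sub>M M)" for z
    proof -
      have "decseq (\<lambda>i. ennreal ((u z - U i z)\<^sup>2))"
        using mono U_le[OF that] by (auto simp: decseq_def intro!: ennreal_leI power_mono)
      then have "(\<lambda>i. ennreal ((u z - U i z)\<^sup>2)) \<longlonglongrightarrow> (INF i. ennreal ((u z - U i z)\<^sup>2))"
        by (rule LIMSEQ_INF)
      moreover have "(\<lambda>i. ennreal ((u z - U i z)\<^sup>2)) \<longlonglongrightarrow> ennreal ((u z - u z)\<^sup>2)"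
        by (intro tendsto_ennrealI tendsto_intros lim that)
      ultimately show ?thesis using LIMSEQ_unique by fastforce
    qed
  qed (use \<open>0 < e\<close> in auto)
  then show "\<exists>v. v \<in> borel_measurable (M \<Otimes>\<^sub>M M) \<and> step_approximable M v \<and>
      (\<integral>\<^sup>+z. ennreal ((u z - v z)\<^sup>2) \<partial>(M \<Otimes>\<^sub>M M)) < ennreal e"
    using approx assms(1) by blast
qed measurable

lemma step_approximable_indicator_disjoint_UN:
  fixes A :: "nat \<Rightarrow> ('a \<times> 'a) set"
  assumes "disjoint_family A" and [measurable]: "\<And>i. A i \<in> sets (M \<Otimes>\<^sub>M M)"
    and approx: "\<And>i. step_approximable M (indicator (A i))"
  shows "step_approximable M (indicator (\<Union>i. A i))"
proof -
  interpret square: finite_measure "M \<Otimes>\<^sub>M M" by (rule finite_measure_square)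
  have partial: "step_approximable M (indicator (\<Union>i<n. A i))" for n
  proof (induction n)
    case 0
    have eq: "indicator (\<Union>i<0. A i) = step_kernel []" by (simp add: fun_eq_iff)
    show ?case unfolding eq by (rule step_approximable_step_kernel) simp
  next
    case (Suc n)
    have "indicator (\<Union>i<Suc n. A i) = (\<lambda>z. indicator (\<Union>i<n. A i) z + indicator (A n) z :: real)"
      using \<open>disjoint_family A\<close>
      by (auto simp: fun_eq_iff lessThan_Suc indicator_def disjoint_family_on_def)
        (metis disjoint_iff less_irrefl)
    moreover have "step_approximable M (\<lambda>z. indicator (\<Union>i<n. A i) z + indicator (A n) z)"
      using Suc approx[of n] by (intro step_approximable_add) measurable
    ultimately show ?case by simp
  qed
  show ?thesis
  proof (rule step_approximable_incseq_limit[OF _ _ _ _ LIMSEQ_indicator_UN _ partial])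
    show "incseq (\<lambda>n. indicator (\<Union>i<n. A i) :: 'a \<times> 'a \<Rightarrow> real)"
      by (intro monoI le_funI) (auto simp: indicator_def)
    have "(\<integral>\<^sup>+z. ennreal ((indicator (\<Union>i. A i) z)\<^sup>2) \<partial>(M \<Otimes>\<^sub>M M)) \<le> (\<integral>\<^sup>+z. 1 \<partial>(M \<Otimes>\<^sub>M M))"
      by (intro nn_integral_mono) (simp add: indicator_def)
    then show "(\<integral>\<^sup>+z. ennreal ((indicator (\<Union>i. A i) z)\<^sup>2) \<partial>(M \<Otimes>\<^sub>M M)) < \<infinity>"
      by (rule le_less_trans) (simp add: less_top[symmetric])
  qed auto
qed

lemma step_approximable_indicator:
  assumes "A \<in> sets (M \<Otimes>\<^sub>M M)"
  shows "step_approximable M (indicator A)"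
  using Int_stable_pair_measure_generator pair_measure_closed assms
  unfolding sets_pair_measure
proof (induct rule: sigma_sets_induct_disjoint)
  case (basic A)
  then obtain a b where A: "A = a \<times> b" and "a \<in> sets M" "b \<in> sets M" by auto
  have eq: "indicator (a \<times> b) = step_kernel [(1, a, b)]"
    by (auto simp: fun_eq_iff indicator_times)
  have "step_approximable M (step_kernel [(1, a, b)])"
    using \<open>a \<in> sets M\<close> \<open>b \<in> sets M\<close> by (intro step_approximable_step_kernel) simp
  then show ?case unfolding A eq .
next
  case empty
  have eq: "indicator {} = step_kernel []" by (simp add: fun_eq_iff)
  show ?case unfolding eq by (rule step_approximable_step_kernel) simp
next
  case (compl A)
  have [measurable]: "A \<in> sets (M \<Otimes>\<^sub>M M)" using compl(1) unfolding sets_pair_measure .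
  have "A \<subseteq> space M \<times> space M"
    using sets.sets_into_space[of A "M \<Otimes>\<^sub>M M"] by (simp add: space_pair_measure)
  let ?L = "[(1, space M, space M)]"
  have "step_approximable M (\<lambda>z. step_kernel ?L z + (- 1) * indicator A z)"
    using compl(2) by (intro step_approximable_add step_approximable_step_kernel step_approximable_scale)
      (auto intro: step_kernel_measurable)
  moreover have "step_kernel ?L z + (- 1) * indicator A z = indicator (space M \<times> space M - A) z"
    if "z \<in> space (M \<Otimes>\<^sub>M M)" for z
    using that \<open>A \<subseteq> space M \<times> space M\<close> by (auto simp: indicator_def space_pair_measure)
  ultimately show ?case by (subst step_approximable_cong[symmetric]) auto
next
  case (union A)
  have "A i \<in> sets (M \<Otimes>\<^sub>M M)" for i using union(2) unfolding sets_pair_measure by auto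
  from union(1) this union(3) show ?case by (rule step_approximable_indicator_disjoint_UN)
qed

lemma step_approximable_nonneg:
  assumes [measurable]: "u \<in> borel_measurable (M \<Otimes>\<^sub>M M)" and "\<And>z. 0 \<le> u z"
    and "(\<integral>\<^sup>+z. ennreal ((u z)\<^sup>2) \<partial>(M \<Otimes>\<^sub>M M)) < \<infinity>"
  shows "step_approximable M u"
proof -
  have "(\<integral>\<^sup>+z. ennreal ((u z)\<^sup>2) \<partial>(M \<Otimes>\<^sub>M M)) < \<infinity> \<longrightarrow> step_approximable M u"
    using assms(1,2)
  proof (induction u rule: borel_measurable_induct_real)
    case (set A) then show ?case by (simp add: step_approximable_indicator)
  next
    case (mult u c)
    note [measurable] = mult(2)
    show ?case
    proof (cases "c = 0")
      case True
      then have "(\<lambda>z. c * u z) = step_kernel []" by (simp add: fun_eq_iff)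
      then show ?thesis using step_approximable_step_kernel[of "[]"] by simp
    next
      case False
      have "(\<integral>\<^sup>+z. ennreal ((c * u z)\<^sup>2) \<partial>(M \<Otimes>\<^sub>M M))
          = ennreal (c\<^sup>2) * (\<integral>\<^sup>+z. ennreal ((u z)\<^sup>2) \<partial>(M \<Otimes>\<^sub>M M))"
        by (simp add: power_mult_distrib ennreal_mult nn_integral_cmult)
      show ?thesis
      proof
        assume "(\<integral>\<^sup>+z. ennreal ((c * u z)\<^sup>2) \<partial>(M \<Otimes>\<^sub>M M)) < \<infinity>"
        with False have "(\<integral>\<^sup>+z. ennreal ((u z)\<^sup>2) \<partial>(M \<Otimes>\<^sub>M M)) < \<infinity>"
          unfolding \<open>_ = ennreal (c\<^sup>2) * _\<close>
          by (simp add: ennreal_mult_less_top) (metis ennreal_zero_less_top)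
        then show "step_approximable M (\<lambda>z. c * u z)"
          using mult(4) by (intro step_approximable_scale) auto
      qed
    qed
  next
    case (add u v)
    have [measurable]: "u \<in> borel_measurable (M \<Otimes>\<^sub>M M)" "v \<in> borel_measurable (M \<Otimes>\<^sub>M M)"
      and nonneg: "\<And>z. 0 \<le> u z" "\<And>z. 0 \<le> v z"
      and IH: "(\<integral>\<^sup>+z. ennreal ((u z)\<^sup>2) \<partial>(M \<Otimes>\<^sub>M M)) < \<infinity> \<Longrightarrow> step_approximable M u"
        "(\<integral>\<^sup>+z. ennreal ((v z)\<^sup>2) \<partial>(M \<Otimes>\<^sub>M M)) < \<infinity> \<Longrightarrow> step_approximable M v"
      using add by blast+
    show ?case
    proof (intro impI)
      assume fin: "(\<integral>\<^sup>+z. ennreal ((v z + u z)\<^sup>2) \<partial>(M \<Otimes>\<^sub>M M)) < \<infinity>"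
      have "(\<integral>\<^sup>+z. ennreal ((w z)\<^sup>2) \<partial>(M \<Otimes>\<^sub>M M)) < \<infinity>" if "w = u \<or> w = v" for w
        using that nonneg by (intro le_less_trans[OF nn_integral_power2_mono fin]) auto
      then have "step_approximable M u" "step_approximable M v" using IH by blast+
      then show "step_approximable M (\<lambda>z. v z + u z)" by (intro step_approximable_add) measurable
    qed
  next
    case (seq U)
    have [measurable]: "\<And>i. U i \<in> borel_measurable (M \<Otimes>\<^sub>M M)"
      and nonneg: "\<And>i z. 0 \<le> U i z" and "incseq U"
      and IH: "\<And>i. (\<integral>\<^sup>+z. ennreal ((U i z)\<^sup>2) \<partial>(M \<Otimes>\<^sub>M M)) < \<infinity> \<longrightarrow> step_approximable M (U i)"
      by (fact seq)+
    have lim: "(\<lambda>i. U i z) \<longlonglongrightarrow> u z" if "z \<in> space (M \<Otimes>\<^sub>M M)" for z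
      using seq(4) that .
    show ?case
    proof
      assume fin: "(\<integral>\<^sup>+z. ennreal ((u z)\<^sup>2) \<partial>(M \<Otimes>\<^sub>M M)) < \<infinity>"
      have mono: "U i z \<le> U j z" if "i \<le> j" for i j z
        by (rule le_funD[OF incseqD[OF \<open>incseq U\<close> that]])
      have "U i z \<le> u z" if "z \<in> space (M \<Otimes>\<^sub>M M)" for i z
        using mono lim[OF that] by (intro incseq_le) (auto simp: incseq_def)
      then have approx: "step_approximable M (U i)" for i
        using nonneg by (intro IH[rule_format, OF le_less_trans[OF nn_integral_power2_mono fin]])
      show "step_approximable M u"
        by (rule step_approximable_incseq_limit[OF _ _ nonneg \<open>incseq U\<close> lim fin approx]) measurable
    qed
  qed
  with assms(3) show ?thesis by simp
qed

lemma step_approximable_square_integrable: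
  assumes [measurable]: "u \<in> borel_measurable (M \<Otimes>\<^sub>M M)"
    and fin: "(\<integral>\<^sup>+z. ennreal ((u z)\<^sup>2) \<partial>(M \<Otimes>\<^sub>M M)) < \<infinity>"
  shows "step_approximable M u"
proof -
  have part: "step_approximable M (\<lambda>z. max 0 (v z))" if [measurable]: "v \<in> borel_measurable (M \<Otimes>\<^sub>M M)"
    and "\<And>z. (v z)\<^sup>2 = (u z)\<^sup>2" for v
  proof (rule step_approximable_nonneg)
    have "(max 0 (v z))\<^sup>2 \<le> (u z)\<^sup>2" for z
      using that(2)[of z] by (cases "0 \<le> v z") auto
    then have "(\<integral>\<^sup>+z. ennreal ((max 0 (v z))\<^sup>2) \<partial>(M \<Otimes>\<^sub>M M)) \<le> (\<integral>\<^sup>+z. ennreal ((u z)\<^sup>2) \<partial>(M \<Otimes>\<^sub>M M))"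
      by (intro nn_integral_mono ennreal_leI)
    then show "(\<integral>\<^sup>+z. ennreal ((max 0 (v z))\<^sup>2) \<partial>(M \<Otimes>\<^sub>M M)) < \<infinity>"
      using fin by (rule le_less_trans)
  qed simp_all
  have "step_approximable M (\<lambda>z. max 0 (u z) + (- 1) * max 0 (- u z))"
    using part[of u] part[of "\<lambda>z. - u z"]
    by (intro step_approximable_add step_approximable_scale) simp_all
  moreover have "(\<lambda>z. max 0 (u z) + (- 1) * max 0 (- u z)) = u"
    by (rule ext) (simp add: max_def)
  ultimately show ?thesis by simp
qed

lemma in_L2_integrable:
  assumes "in_L2 M f" shows "integrable M f"
proof -
  have [measurable]: "f \<in> borel_measurable M" using assms unfolding in_L2_def by simp
  have "integrable M (\<lambda>x. (f x)\<^sup>2)"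
    using assms unfolding in_L2_def integrable_iff_bounded by simp
  then show ?thesis by (rule square_integrable_imp_integrable[rotated]) measurable
qed

lemma nn_integral_square_integral_le:
  fixes h :: "'a \<times> 'a \<Rightarrow> real"
  assumes [measurable]: "h \<in> borel_measurable (M \<Otimes>\<^sub>M M)" "f \<in> borel_measurable M"
  shows "(\<integral>\<^sup>+x. ennreal ((\<integral>y. h (x, y) * f y \<partial>M)\<^sup>2) \<partial>M)
      \<le> (\<integral>\<^sup>+z. ennreal ((h z)\<^sup>2) \<partial>(M \<Otimes>\<^sub>M M)) * (\<integral>\<^sup>+y. ennreal ((f y)\<^sup>2) \<partial>M)"
proof -
  have pointwise: "ennreal ((\<integral>y. h (x, y) * f y \<partial>M)\<^sup>2)
      \<le> (\<integral>\<^sup>+y. ennreal ((h (x, y))\<^sup>2) \<partial>M) * (\<integral>\<^sup>+y. ennreal ((f y)\<^sup>2) \<partial>M)"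
    if "x \<in> space M" for x
  proof (cases "integrable M (\<lambda>y. h (x, y) * f y)")
    case True
    have [measurable]: "(\<lambda>y. h (x, y)) \<in> borel_measurable M" using that by measurable
    have "ennreal ((\<integral>y. h (x, y) * f y \<partial>M)\<^sup>2) = (ennreal (norm (\<integral>y. h (x, y) * f y \<partial>M)))\<^sup>2"
      by (simp add: ennreal_power)
    also have "\<dots> \<le> (\<integral>\<^sup>+y. ennreal \<bar>h (x, y)\<bar> * ennreal \<bar>f y\<bar> \<partial>M)\<^sup>2"
      using integral_norm_bound_ennreal[OF True] by (intro power_mono) (auto simp: abs_mult ennreal_mult)
    also have "\<dots> \<le> (\<integral>\<^sup>+y. (ennreal \<bar>h (x, y)\<bar>)\<^sup>2 \<partial>M) * (\<integral>\<^sup>+y. (ennreal \<bar>f y\<bar>)\<^sup>2 \<partial>M)"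
      by (rule Cauchy_Schwarz_nn_integral) measurable
    finally show ?thesis by (simp add: ennreal_power)
  qed (simp add: not_integrable_integral_eq)
  have "(\<integral>\<^sup>+x. ennreal ((\<integral>y. h (x, y) * f y \<partial>M)\<^sup>2) \<partial>M)
      \<le> (\<integral>\<^sup>+x. (\<integral>\<^sup>+y. ennreal ((h (x, y))\<^sup>2) \<partial>M) * (\<integral>\<^sup>+y. ennreal ((f y)\<^sup>2) \<partial>M) \<partial>M)"
    by (intro nn_integral_mono pointwise)
  also have "\<dots> = (\<integral>\<^sup>+x. \<integral>\<^sup>+y. ennreal ((h (x, y))\<^sup>2) \<partial>M \<partial>M) * (\<integral>\<^sup>+y. ennreal ((f y)\<^sup>2) \<partial>M)"
    by (rule nn_integral_multc) measurable
  also have "(\<integral>\<^sup>+x. \<integral>\<^sup>+y. ennreal ((h (x, y))\<^sup>2) \<partial>M \<partial>M) = (\<integral>\<^sup>+z. ennreal ((h z)\<^sup>2) \<partial>(M \<Otimes>\<^sub>M M))"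
    by (rule nn_integral_fst) measurable
  finally show ?thesis .
qed

lemma integral_step_kernel_eq_step_op:
  assumes "step_sets M L" and "integrable M f"
  shows "integrable M (\<lambda>y. step_kernel L (x, y) * f y)"
    and "(\<integral>y. step_kernel L (x, y) * f y \<partial>M) = step_op M L f x"
proof -
  have "integrable M (\<lambda>y. step_kernel L (x, y) * f y) \<and>
      (\<integral>y. step_kernel L (x, y) * f y \<partial>M) = step_op M L f x"
    using assms(1)
  proof (induction L)
    case (Cons p L)
    obtain c A B where p: "p = (c, A, B)" by (cases p)
    with Cons have "B \<in> sets M" by simp
    then have "integrable M (\<lambda>y. indicator B y * f y)"
      using integrable_real_mult_indicator[OF _ \<open>integrable M f\<close>] by (simp add: mult_ac)
    then have "integrable M (\<lambda>y. c * indicator A x * (indicator B y * f y))"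
      by (rule integrable_mult_right)
    moreover have "(\<lambda>y. step_kernel (p # L) (x, y) * f y)
        = (\<lambda>y. c * indicator A x * (indicator B y * f y) + step_kernel L (x, y) * f y)"
      by (simp add: p fun_eq_iff algebra_simps)
    ultimately show ?case using Cons p by simp
  qed simp
  then show "integrable M (\<lambda>y. step_kernel L (x, y) * f y)"
    and "(\<integral>y. step_kernel L (x, y) * f y \<partial>M) = step_op M L f x" by auto
qed

lemma abs_integral_indicator_mult_le:
  assumes "in_L2 M f" and norm: "(\<integral>\<^sup>+ x. ennreal ((f x)\<^sup>2) \<partial>M) \<le> 1" and "B \<in> sets M"
  shows "\<bar>\<integral>y. indicator B y * f y \<partial>M\<bar> \<le> sqrt (measure M (space M))"
proof -
  have [measurable]: "f \<in> borel_measurable M" using assms(1) unfolding in_L2_def by simp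
  have int: "integrable M (\<lambda>y. indicator B y * f y)"
    using integrable_real_mult_indicator[OF \<open>B \<in> sets M\<close> in_L2_integrable[OF assms(1)]]
    by (simp add: mult_ac)
  have "ennreal \<bar>\<integral>y. indicator B y * f y \<partial>M\<bar> \<le> (\<integral>\<^sup>+y. ennreal (norm (indicator B y * f y)) \<partial>M)"
    using integral_norm_bound_ennreal[OF int] by simp
  also have "\<dots> \<le> (\<integral>\<^sup>+y. 1 * ennreal \<bar>f y\<bar> \<partial>M)"
    by (intro nn_integral_mono ennreal_leI) (auto simp: indicator_def)
  finally have "(ennreal \<bar>\<integral>y. indicator B y * f y \<partial>M\<bar>)\<^sup>2 \<le> (\<integral>\<^sup>+y. 1 * ennreal \<bar>f y\<bar> \<partial>M)\<^sup>2"
    by (rule power_mono) simp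
  also have "\<dots> \<le> (\<integral>\<^sup>+y. 1\<^sup>2 \<partial>M) * (\<integral>\<^sup>+y. (ennreal \<bar>f y\<bar>)\<^sup>2 \<partial>M)"
    by (rule Cauchy_Schwarz_nn_integral) measurable
  also have "\<dots> = emeasure M (space M) * (\<integral>\<^sup>+ x. ennreal ((f x)\<^sup>2) \<partial>M)"
    by (simp add: ennreal_power)
  also have "\<dots> \<le> emeasure M (space M) * 1"
    using norm by (intro mult_left_mono) auto
  finally have "ennreal ((\<integral>y. indicator B y * f y \<partial>M)\<^sup>2) \<le> ennreal (measure M (space M))"
    by (simp add: ennreal_power emeasure_eq_measure)
  then have "(\<integral>y. indicator B y * f y \<partial>M)\<^sup>2 \<le> measure M (space M)" by (simp add: ennreal_le_iff)
  then show ?thesis by (metis real_sqrt_abs real_sqrt_le_mono)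
qed

text \<open>Finite-rank operators are compact: along a subsequence all finitely many coefficients
  $\int_B f_n$ converge (Bolzano--Weierstrass).\<close>

lemma step_op_L2_Cauchy_subseq:
  fixes F :: "nat \<Rightarrow> 'a \<Rightarrow> real"
  assumes "step_sets M L"
    and F: "\<And>n. in_L2 M (F n)" "\<And>n. (\<integral>\<^sup>+ x. ennreal ((F n x)\<^sup>2) \<partial>M) \<le> 1"
  shows "\<exists>r. strict_mono r \<and> L2_Cauchy M (\<lambda>n. step_op M L (F (r n)))"
  using assms
proof (induction L arbitrary: F)
  case Nil
  show ?case by (intro exI[of _ id]) (simp add: strict_mono_def L2_Cauchy_def)
next
  case (Cons p L)
  obtain c A B where p: "p = (c, A, B)" by (cases p)
  with Cons.prems have [measurable]: "A \<in> sets M" "B \<in> sets M" and "step_sets M L" by auto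
  define a where "a n = (\<integral>y. indicator B y * F n y \<partial>M)" for n
  have "bounded (range a)"
    using abs_integral_indicator_mult_le[OF Cons.prems(2,3) \<open>B \<in> sets M\<close>]
    unfolding a_def bounded_iff by (auto simp: real_norm_def)
  then obtain r1 l where r1: "strict_mono r1" and "(a \<circ> r1) \<longlonglongrightarrow> l"
    using bounded_imp_convergent_subsequence by blast
  obtain r2 where r2: "strict_mono r2" and IH: "L2_Cauchy M (\<lambda>n. step_op M L (F (r1 (r2 n))))"
    using Cons.IH[OF \<open>step_sets M L\<close>, of "\<lambda>n. F (r1 n)"] Cons.prems by blast
  have "(\<lambda>n. a (r1 (r2 n))) \<longlonglongrightarrow> l"
    using LIMSEQ_subseq_LIMSEQ[OF \<open>(a \<circ> r1) \<longlonglongrightarrow> l\<close> r2] by (simp add: o_def)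
  then have "Cauchy (\<lambda>n. a (r1 (r2 n)))" by (rule LIMSEQ_imp_Cauchy)
  moreover have "(\<integral>\<^sup>+x. ennreal ((c * indicator A x)\<^sup>2) \<partial>M) < \<infinity>"
  proof -
    have "(\<integral>\<^sup>+x. ennreal ((c * indicator A x)\<^sup>2) \<partial>M) \<le> (\<integral>\<^sup>+x. ennreal (c\<^sup>2) \<partial>M)"
      by (intro nn_integral_mono ennreal_leI) (simp add: indicator_def)
    also have "\<dots> = ennreal (c\<^sup>2) * emeasure M (space M)" by simp
    also have "\<dots> < \<infinity>" by (simp add: ennreal_mult_less_top emeasure_eq_measure)
    finally show ?thesis .
  qed
  ultimately have "L2_Cauchy M (\<lambda>n x. a (r1 (r2 n)) * (c * indicator A x))"
    by (intro L2_Cauchy_scaled) measurable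
  then have "L2_Cauchy M (\<lambda>n x. a (r1 (r2 n)) * (c * indicator A x) + step_op M L (F (r1 (r2 n))) x)"
    using IH \<open>step_sets M L\<close> by (intro L2_Cauchy_add) measurable
  moreover have "step_op M (p # L) (F (r1 (r2 n))) x
      = a (r1 (r2 n)) * (c * indicator A x) + step_op M L (F (r1 (r2 n))) x" for n x
    by (simp add: p a_def)
  ultimately show ?case using strict_mono_o[OF r1 r2] by (intro exI[of _ "r1 \<circ> r2"]) (simp add: o_def)
qed

lemma nn_integral_kernel_op_diff_le:
  fixes \<kappa> :: "'a \<Rightarrow> 'a \<Rightarrow> real"
  assumes [measurable]: "(\<lambda>z. \<kappa> (fst z) (snd z)) \<in> borel_measurable (M \<Otimes>\<^sub>M M)"
    and int: "AE x in M. integrable M (\<lambda>y. \<kappa> x y * f y)" and "step_sets M L" and "in_L2 M f"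
  shows "(\<integral>\<^sup>+x. ennreal ((T_op M \<kappa> f x - step_op M L f x)\<^sup>2) \<partial>M)
    \<le> (\<integral>\<^sup>+z. ennreal ((\<kappa> (fst z) (snd z) - step_kernel L z)\<^sup>2) \<partial>(M \<Otimes>\<^sub>M M))
      * (\<integral>\<^sup>+y. ennreal ((f y)\<^sup>2) \<partial>M)"
proof -
  have [measurable]: "f \<in> borel_measurable M" using \<open>in_L2 M f\<close> unfolding in_L2_def by simp
  define h where "h z = \<kappa> (fst z) (snd z) - step_kernel L z" for z
  have [measurable]: "h \<in> borel_measurable (M \<Otimes>\<^sub>M M)" unfolding h_def using \<open>step_sets M L\<close> by measurable
  have "AE x in M. T_op M \<kappa> f x - step_op M L f x = (\<integral>y. h (x, y) * f y \<partial>M)"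
    using int
  proof eventually_elim
    case (elim x)
    note step = integral_step_kernel_eq_step_op[OF \<open>step_sets M L\<close> in_L2_integrable[OF \<open>in_L2 M f\<close>]]
    have "(\<integral>y. h (x, y) * f y \<partial>M) = (\<integral>y. \<kappa> x y * f y - step_kernel L (x, y) * f y \<partial>M)"
      by (simp add: h_def algebra_simps)
    also have "\<dots> = T_op M \<kappa> f x - step_op M L f x"
      using elim step[of x] by (simp add: T_op_def)
    finally show ?case by simp
  qed
  then have "(\<integral>\<^sup>+x. ennreal ((T_op M \<kappa> f x - step_op M L f x)\<^sup>2) \<partial>M)
      = (\<integral>\<^sup>+x. ennreal ((\<integral>y. h (x, y) * f y \<partial>M)\<^sup>2) \<partial>M)"
    by (intro nn_integral_cong_AE) (auto elim!: AE_mp)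
  also have "\<dots> \<le> (\<integral>\<^sup>+z. ennreal ((h z)\<^sup>2) \<partial>(M \<Otimes>\<^sub>M M)) * (\<integral>\<^sup>+y. ennreal ((f y)\<^sup>2) \<partial>M)"
    by (rule nn_integral_square_integral_le) measurable
  finally show ?thesis unfolding h_def .
qed

lemma square_integrable_kernel_op:
  fixes \<kappa> :: "'a \<Rightarrow> 'a \<Rightarrow> real"
  assumes [measurable]: "(\<lambda>z. \<kappa> (fst z) (snd z)) \<in> borel_measurable (M \<Otimes>\<^sub>M M)"
    and HS: "(\<integral>\<^sup>+z. ennreal ((\<kappa> (fst z) (snd z))\<^sup>2) \<partial>(M \<Otimes>\<^sub>M M)) < \<infinity>" and "in_L2 M f"
  shows "AE x in M. integrable M (\<lambda>y. \<kappa> x y * f y)" and "in_L2 M (T_op M \<kappa> f)"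
proof -
  have [measurable]: "f \<in> borel_measurable M" using \<open>in_L2 M f\<close> unfolding in_L2_def by simp
  have f_fin: "(\<integral>\<^sup>+y. ennreal ((f y)\<^sup>2) \<partial>M) < \<infinity>" using \<open>in_L2 M f\<close> unfolding in_L2_def by simp
  have "(\<integral>\<^sup>+x. \<integral>\<^sup>+y. ennreal ((\<kappa> x y)\<^sup>2) \<partial>M \<partial>M) = (\<integral>\<^sup>+z. ennreal ((\<kappa> (fst z) (snd z))\<^sup>2) \<partial>(M \<Otimes>\<^sub>M M))"
    using nn_integral_fst[of "\<lambda>z. ennreal ((\<kappa> (fst z) (snd z))\<^sup>2)"] by simp
  then have "AE x in M. (\<integral>\<^sup>+y. ennreal ((\<kappa> x y)\<^sup>2) \<partial>M) \<noteq> \<infinity>"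
    using HS by (intro nn_integral_PInf_AE) auto
  then show "AE x in M. integrable M (\<lambda>y. \<kappa> x y * f y)"
  proof (rule AE_mp, intro AE_I2 impI)
    fix x assume "x \<in> space M" and fin: "(\<integral>\<^sup>+y. ennreal ((\<kappa> x y)\<^sup>2) \<partial>M) \<noteq> \<infinity>"
    have [measurable]: "\<kappa> x \<in> borel_measurable M"
      using measurable_Pair2[OF assms(1) \<open>x \<in> space M\<close>] by simp
    have "(\<integral>\<^sup>+y. ennreal (norm (\<kappa> x y * f y)) \<partial>M)\<^sup>2
        = (\<integral>\<^sup>+y. ennreal \<bar>\<kappa> x y\<bar> * ennreal \<bar>f y\<bar> \<partial>M)\<^sup>2"
      by (simp add: abs_mult ennreal_mult)
    also have "\<dots> \<le> (\<integral>\<^sup>+y. (ennreal \<bar>\<kappa> x y\<bar>)\<^sup>2 \<partial>M) * (\<integral>\<^sup>+y. (ennreal \<bar>f y\<bar>)\<^sup>2 \<partial>M)"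
      by (rule Cauchy_Schwarz_nn_integral) measurable
    also have "\<dots> < \<infinity>"
      using fin f_fin by (simp add: ennreal_power ennreal_mult_less_top less_top)
    finally show "integrable M (\<lambda>y. \<kappa> x y * f y)"
      by (intro integrableI_bounded) (auto simp: power_less_top_ennreal)
  qed
  have "(\<integral>\<^sup>+x. ennreal ((T_op M \<kappa> f x)\<^sup>2) \<partial>M)
      \<le> (\<integral>\<^sup>+z. ennreal ((\<kappa> (fst z) (snd z))\<^sup>2) \<partial>(M \<Otimes>\<^sub>M M)) * (\<integral>\<^sup>+y. ennreal ((f y)\<^sup>2) \<partial>M)"
    unfolding T_op_def using nn_integral_square_integral_le[of "\<lambda>z. \<kappa> (fst z) (snd z)" f] by simp
  also have "\<dots> < \<infinity>" using HS f_fin by (simp add: ennreal_mult_less_top)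
  finally show "in_L2 M (T_op M \<kappa> f)" unfolding in_L2_def T_op_def by simp
qed

text \<open>Hilbert--Schmidt operators are norm limits of finite-rank operators.\<close>

lemma T_compact_if_square_integrable:
  fixes \<kappa> :: "'a \<Rightarrow> 'a \<Rightarrow> real"
  assumes [measurable]: "(\<lambda>z. \<kappa> (fst z) (snd z)) \<in> borel_measurable (M \<Otimes>\<^sub>M M)"
    and HS: "(\<integral>\<^sup>+z. ennreal ((\<kappa> (fst z) (snd z))\<^sup>2) \<partial>(M \<Otimes>\<^sub>M M)) < \<infinity>"
  shows "T_compact M \<kappa>"
  unfolding T_compact_def
proof (intro conjI allI impI)
  show "AE x in M. integrable M (\<lambda>y. \<kappa> x y * f y)" and "in_L2 M (T_op M \<kappa> f)"
    if "in_L2 M f" for f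
    using square_integrable_kernel_op[OF assms that] by blast+
  fix F :: "nat \<Rightarrow> 'a \<Rightarrow> real"
  assume "\<forall>n. in_L2 M (F n) \<and> (\<integral>\<^sup>+ x. ennreal ((F n x)\<^sup>2) \<partial>M) \<le> 1"
  then have F: "\<And>n. in_L2 M (F n)" "\<And>n. (\<integral>\<^sup>+ x. ennreal ((F n x)\<^sup>2) \<partial>M) \<le> 1" by auto
  have "\<forall>j. \<exists>L. step_sets M L \<and>
      (\<integral>\<^sup>+z. ennreal ((\<kappa> (fst z) (snd z) - step_kernel L z)\<^sup>2) \<partial>(M \<Otimes>\<^sub>M M)) < ennreal (1 / Suc j)"
    using step_approximable_square_integrable[OF assms] unfolding step_approximable_def by simp
  then obtain Ls where "\<forall>j. step_sets M (Ls j) \<and>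
      (\<integral>\<^sup>+z. ennreal ((\<kappa> (fst z) (snd z) - step_kernel (Ls j) z)\<^sup>2) \<partial>(M \<Otimes>\<^sub>M M)) < ennreal (1 / Suc j)"
    by metis
  then have Ls: "\<And>j. step_sets M (Ls j)"
    "\<And>j. (\<integral>\<^sup>+z. ennreal ((\<kappa> (fst z) (snd z) - step_kernel (Ls j) z)\<^sup>2) \<partial>(M \<Otimes>\<^sub>M M)) < ennreal (1 / Suc j)"
    by auto
  have "\<exists>r. strict_mono r \<and> L2_Cauchy M (\<lambda>n. T_op M \<kappa> (F (r n)))"
  proof (rule L2_Cauchy_subseq_if_approx[where H = "\<lambda>j n. step_op M (Ls j) (F n)"])
    show "T_op M \<kappa> (F n) \<in> borel_measurable M" for n
      using square_integrable_kernel_op(2)[OF assms F(1)] unfolding in_L2_def by simp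
    show "step_op M (Ls j) (F n) \<in> borel_measurable M" for j n using Ls(1) by measurable
    show "(\<integral>\<^sup>+x. ennreal ((T_op M \<kappa> (F n) x - step_op M (Ls j) (F n) x)\<^sup>2) \<partial>M) \<le> ennreal (1 / Suc j)"
      for j n
    proof -
      have "(\<integral>\<^sup>+x. ennreal ((T_op M \<kappa> (F n) x - step_op M (Ls j) (F n) x)\<^sup>2) \<partial>M)
          \<le> (\<integral>\<^sup>+z. ennreal ((\<kappa> (fst z) (snd z) - step_kernel (Ls j) z)\<^sup>2) \<partial>(M \<Otimes>\<^sub>M M))
            * (\<integral>\<^sup>+ x. ennreal ((F n x)\<^sup>2) \<partial>M)"
        by (rule nn_integral_kernel_op_diff_le[OF assms(1) square_integrable_kernel_op(1)[OF assms F(1)]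
            Ls(1) F(1)])
      also have "\<dots> \<le> (\<integral>\<^sup>+z. ennreal ((\<kappa> (fst z) (snd z) - step_kernel (Ls j) z)\<^sup>2) \<partial>(M \<Otimes>\<^sub>M M)) * 1"
        using F(2)[of n] by (intro mult_left_mono) simp_all
      also have "\<dots> \<le> ennreal (1 / Suc j)" using Ls(2)[of j] by simp
      finally show ?thesis .
    qed
    show "\<exists>r. strict_mono r \<and> L2_Cauchy M (\<lambda>n. step_op M (Ls j) (F (s (r n))))"
      if "strict_mono s" for j and s :: "nat \<Rightarrow> nat"
      using step_op_L2_Cauchy_subseq[OF Ls(1), of "\<lambda>n. F (s n)"] F by blast
  qed
  then show "\<exists>r :: nat \<Rightarrow> nat. strict_mono r \<and> (\<forall>e>0. \<exists>N::nat. \<forall>m\<ge>N. \<forall>n\<ge>N.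
      (\<integral>\<^sup>+ x. ennreal ((T_op M \<kappa> (F (r m)) x - T_op M \<kappa> (F (r n)) x)\<^sup>2) \<partial>M) < ennreal e)"
    unfolding L2_Cauchy_def .
qed

end

theorem theorem3p4:
  fixes M :: "'a measure" and \<kappa> :: "'a \<Rightarrow> 'a \<Rightarrow> real"
  assumes "type_space M" and "is_kernel M \<kappa>"
  shows "(critical M \<kappa> \<and> T_compact M \<kappa> \<longrightarrow> chi M \<kappa> = \<infinity>)
       \<and> ((\<integral>\<^sup>+ z. ennreal ((\<kappa> (fst z) (snd z))\<^sup>2) \<partial>(M \<Otimes>\<^sub>M M)) < \<infinity> \<longrightarrow> T_compact M \<kappa>)
       \<and> (critical M \<kappa> \<and> (\<integral>\<^sup>+ z. ennreal ((\<kappa> (fst z) (snd z))\<^sup>2) \<partial>(M \<Otimes>\<^sub>M M)) < \<infinity>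
            \<longrightarrow> chi M \<kappa> = \<infinity>)
       \<and> (supercritical M \<kappa> \<longrightarrow> chi M \<kappa> = \<infinity>)"
proof -
  interpret type_space_kernel M \<kappa> using assms by unfold_locales
  have "T_compact M \<kappa>" if "(\<integral>\<^sup>+ z. ennreal ((\<kappa> (fst z) (snd z))\<^sup>2) \<partial>(M \<Otimes>\<^sub>M M)) < \<infinity>"
    using kernel_measurable that by (rule T_compact_if_square_integrable)
  then show ?thesis using chi_critical_compact chi_supercritical by blast
qed

end
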